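(* Let $T,S\in\mathcal M_n(\mathbb C)$. Then for every $p>0$ and all $t\in[0,1]$, $$\|T+S\|_p\le\big\||T^*|^{2t}+|S^*|^{2t}\big\|^{1/2}\big\||T|^{2(1-t)}+|S|^{2(1-t)}\big\|_{p/2}^{1/2}$$ and $$\|T+S\|_p\le\big\||T^*|^{2t}+|S^*|^{2(1-t)}\big\|^{1/2}\big\||T|^{2(1-t)}+|S|^{2t}\big\|_{p/2}^{1/2}.$$
   Context: $|T|=(T^*T)^{1/2}$, $|T^*|=(TT^* )^{1/2}$, powers via functional calculus with $|T|^0=I$. Singular values $s_1(T)\ge\dots\ge s_n(T)$ are the eigenvalues of $|T|$; $\|T\|=s_1(T)$; for $p>0$, $\|T\|_p=(\sum_j s_j^p(T))^{1/p}$. *)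

theory Defs
  imports "Jordan_Normal_Form.Schur_Decomposition"
begin

definition unitary_mat :: "nat \<Rightarrow> complex mat \<Rightarrow> bool" where
  "unitary_mat n U \<longleftrightarrow> U \<in> carrier_mat n n \<and> U * mat_adjoint U = 1\<^sub>m n \<and> mat_adjoint U * U = 1\<^sub>m n"

definition rdiag :: "real list \<Rightarrow> complex mat" where
  "rdiag d = mat (length d) (length d) (\<lambda>(i,j). if i = j then complex_of_real (d ! i) else 0)"

definition psd_spec :: "complex mat \<Rightarrow> complex mat \<times> real list \<Rightarrow> bool" where
  "psd_spec A ud \<longleftrightarrow> (let n = dim_row A; U = fst ud; d = snd ud in
      unitary_mat n U \<and> length d = n \<and> (\<forall>i<n. d ! i \<ge> 0) \<and>
      A = U * rdiag d * mat_adjoint U)"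

definition psd_decomp :: "complex mat \<Rightarrow> complex mat \<times> real list" where
  "psd_decomp A = (SOME ud. psd_spec A ud)"

(* real power of a nonnegative number, with the convention x^0 = 1 (so that |T|^0 = I) *)
definition rpow :: "real \<Rightarrow> real \<Rightarrow> real" where
  "rpow x r = (if r = 0 then 1 else x powr r)"

definition psd_pow :: "complex mat \<Rightarrow> real \<Rightarrow> complex mat" where
  "psd_pow A r = (let (U, d) = psd_decomp A in U * rdiag (map (\<lambda>x. rpow x r) d) * mat_adjoint U)"

definition psd_eigenvalues :: "complex mat \<Rightarrow> real list" where
  "psd_eigenvalues A = snd (psd_decomp A)"

definition mat_abs :: "complex mat \<Rightarrow> complex mat" where
  "mat_abs T = psd_pow (mat_adjoint T * T) (1/2)"

definition singular_values :: "complex mat \<Rightarrow> real list" where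
  "singular_values T = rev (sort (psd_eigenvalues (mat_abs T)))"

definition op_norm :: "complex mat \<Rightarrow> real" where
  "op_norm T = hd (singular_values T)"

definition schatten_norm :: "real \<Rightarrow> complex mat \<Rightarrow> real" where
  "schatten_norm p T = (\<Sum>s\<leftarrow>singular_values T. s powr p) powr (1/p)"

end

(*
  The heart of the proof is the vector inequality
    |(T + S) x|^2 <= ||M|| <x, N x>,  where M = |T*|^(2t) + |S*|^(2r) and N = |T|^(2(1-t)) + |S|^(2(1-r)).
  It follows from the mixed Schwarz inequality |<w, T x>|^2 <= <x, |T|^(2(1-t)) x> <w, |T*|^(2t) w>
  for T and for S, the triangle inequality and the Cauchy-Schwarz inequality for two terms, taking
  w = (T + S) x. Hence (T + S)*(T + S) <= ||M|| N in the Loewner order, so Weyl's monotonicity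
  principle gives s_k(T + S)^2 <= ||M|| lambda_k(N) for every k; raising to the power p/2 and summing
  yields the bound. The two inequalities of the theorem are the cases r = t and r = 1 - t.

  The mixed Schwarz inequality is proved in an orthonormal eigenbasis y_i of T*T: the vectors T y_i are
  orthogonal eigenvectors of |T*|, with the same eigenvalues as the y_i for |T|.

  As |T|^r and the singular values are defined through a chosen spectral decomposition, the argument
  also needs the spectral theorem for Hermitian matrices and the uniqueness of the spectrum, which is
  again a consequence of Weyl's principle.
*)

theory Submission
  imports Defs
begin

section \<open>Adjoints, diagonal matrices and the inner product\<close>

lemma mat_adjoint_dim [simp]:
  "dim_row (mat_adjoint A) = dim_col A" "dim_col (mat_adjoint A) = dim_row A"
  unfolding mat_adjoint_def mat_of_rows_def by simp_all

lemma mat_adjoint_carrier [simp]: "A \<in> carrier_mat n m \<Longrightarrow> mat_adjoint A \<in> carrier_mat m n"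
  unfolding carrier_mat_def by simp

lemma mat_adjoint_index [simp]:
  "i < dim_col A \<Longrightarrow> j < dim_row A \<Longrightarrow> mat_adjoint (A::complex mat) $$ (i,j) = cnj (A $$ (j,i))"
  unfolding mat_adjoint_def by (simp add: mat_of_rows_def)

lemma mat_adjoint_adjoint [simp]: "mat_adjoint (mat_adjoint (A::complex mat)) = A"
  by (rule eq_matI) simp_all

lemma mat_adjoint_mult:
  assumes "A \<in> carrier_mat n m" "B \<in> carrier_mat m k"
  shows "mat_adjoint (A * B) = mat_adjoint B * mat_adjoint (A::complex mat)"
proof (rule eq_matI)
  fix i j assume "i < dim_row (mat_adjoint B * mat_adjoint A)" "j < dim_col (mat_adjoint B * mat_adjoint A)"
  with assms show "mat_adjoint (A * B) $$ (i, j) = (mat_adjoint B * mat_adjoint A) $$ (i, j)"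
    by (simp add: scalar_prod_def mult.commute cnj_sum)
qed (use assms in simp_all)

lemma mat_adjoint_add:
  "A \<in> carrier_mat n m \<Longrightarrow> B \<in> carrier_mat n m \<Longrightarrow>
   mat_adjoint (A + B) = mat_adjoint A + mat_adjoint (B::complex mat)"
  by (rule eq_matI) simp_all

lemma mat_adjoint_one [simp]: "mat_adjoint (1\<^sub>m n :: complex mat) = 1\<^sub>m n"
  by (rule eq_matI) simp_all

text \<open>Unlike \<open>mult_carrier_mat\<close>, this determines the inner dimension, so it works as a
  simplification rule for products of square matrices.\<close>
lemma mult_carrier_mat_square [simp]:
  "A \<in> carrier_mat n n \<Longrightarrow> B \<in> carrier_mat n n \<Longrightarrow> A * B \<in> carrier_mat n n"
  by (rule mult_carrier_mat)

lemma mult_mat_vec_adjoint_carrier [simp]: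
  "A \<in> carrier_mat m n \<Longrightarrow> mat_adjoint A *\<^sub>v v \<in> carrier_vec n"
  by (intro carrier_vecI) (simp add: carrier_matD(2))

lemma col_in_carrier_vec [simp]: "U \<in> carrier_mat n m \<Longrightarrow> col U i \<in> carrier_vec n"
  by (intro carrier_vecI) (simp add: carrier_matD(1))

lemma rdiag_carrier [simp]: "rdiag d \<in> carrier_mat (length d) (length d)"
  and rdiag_dim [simp]: "dim_row (rdiag d) = length d" "dim_col (rdiag d) = length d"
  unfolding rdiag_def by simp_all

lemma rdiag_index [simp]:
  "i < length d \<Longrightarrow> j < length d \<Longrightarrow> rdiag d $$ (i,j) = (if i = j then complex_of_real (d!i) else 0)"
  unfolding rdiag_def by simp

lemma mat_adjoint_rdiag [simp]: "mat_adjoint (rdiag d) = rdiag d"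
  by (rule eq_matI) simp_all

lemma sum_eq_single:
  assumes "finite A" "j \<in> A" "\<And>i. i \<in> A \<Longrightarrow> i \<noteq> j \<Longrightarrow> f i = 0"
  shows "sum f A = f j"
proof -
  have "sum f A = f j + sum f (A - {j})" using assms(1,2) by (rule sum.remove)
  also have "sum f (A - {j}) = 0" by (rule sum.neutral) (use assms(3) in blast)
  finally show ?thesis by simp
qed

lemma mult_rdiag_index [simp]:
  assumes "A \<in> carrier_mat n (length d)" "i < n" "j < length d"
  shows "(A * rdiag d) $$ (i,j) = A $$ (i,j) * d!j"
proof -
  have "(A * rdiag d) $$ (i,j) = (\<Sum>k\<in>{0..<length d}. A $$ (i,k) * rdiag d $$ (k,j))"
    using assms by (simp add: scalar_prod_def)
  also have "\<dots> = A $$ (i,j) * rdiag d $$ (j,j)"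
    by (rule sum_eq_single) (use assms in simp_all)
  finally show ?thesis using assms by simp
qed

lemma rdiag_mult_index [simp]:
  assumes "A \<in> carrier_mat (length d) n" "i < length d" "j < n"
  shows "(rdiag d * A) $$ (i,j) = d!i * A $$ (i,j)"
proof -
  have "(rdiag d * A) $$ (i,j) = (\<Sum>k\<in>{0..<length d}. rdiag d $$ (i,k) * A $$ (k,j))"
    using assms by (simp add: scalar_prod_def)
  also have "\<dots> = rdiag d $$ (i,i) * A $$ (i,j)"
    by (rule sum_eq_single) (use assms in simp_all)
  finally show ?thesis using assms by simp
qed

lemma rdiag_mult_rdiag: "rdiag (map f d) * rdiag (map g d) = rdiag (map (\<lambda>x. f x * g x) d)"
proof (rule eq_matI)
  fix i j assume "i < dim_row (rdiag (map (\<lambda>x. f x * g x) d))" "j < dim_col (rdiag (map (\<lambda>x. f x * g x) d))"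
  hence "i < length d" "j < length d" by auto
  thus "(rdiag (map f d) * rdiag (map g d)) $$ (i, j) = rdiag (map (\<lambda>x. f x * g x) d) $$ (i, j)"
    by (subst rdiag_mult_index[where n="length d"]) auto
qed auto

lemma rdiag_mult_vec_index [simp]:
  assumes "x \<in> carrier_vec (length d)" "i < length d"
  shows "(rdiag d *\<^sub>v x) $ i = d!i * x$i"
proof -
  have "(rdiag d *\<^sub>v x) $ i = (\<Sum>k\<in>{0..<length d}. rdiag d $$ (i,k) * x $ k)"
    using assms by (simp add: scalar_prod_def)
  also have "\<dots> = rdiag d $$ (i,i) * x $ i"
    by (rule sum_eq_single) (use assms in simp_all)
  finally show ?thesis using assms by simp
qed

lemma row_scalar_prod_sum:
  "A \<in> carrier_mat n m \<Longrightarrow> x \<in> carrier_vec m \<Longrightarrow> i < n \<Longrightarrow> row A i \<bullet> x = (\<Sum>j<m. A $$ (i,j) * x $ j)"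
  by (auto simp: scalar_prod_def atLeast0LessThan)

lemma mult_unit_vec:
  assumes "(A :: complex mat) \<in> carrier_mat n n" "i < n"
  shows "A *\<^sub>v unit_vec n i = col A i"
proof -
  have "A *\<^sub>v unit_vec n i = A *\<^sub>v col (1\<^sub>m n) i" using assms(2) by simp
  also have "\<dots> = col (A * 1\<^sub>m n) i" using assms by (subst col_mult2[of _ n n _ n]) simp_all
  also have "A * 1\<^sub>m n = A" by (rule right_mult_one_mat[OF assms(1)])
  finally show ?thesis .
qed

text \<open>Conjugate-linear in the first argument: \<open>cinner x y = y \<bullet>c x\<close>.\<close>
definition cinner :: "complex vec \<Rightarrow> complex vec \<Rightarrow> complex" where
  "cinner x y = (\<Sum>i<dim_vec x. cnj (x$i) * y$i)"

lemma cinner_adjoint: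
  assumes A: "A \<in> carrier_mat n m" and x: "x \<in> carrier_vec n" and y: "y \<in> carrier_vec m"
  shows "cinner x (A *\<^sub>v y) = cinner (mat_adjoint A *\<^sub>v x) y"
proof -
  have "cinner x (A *\<^sub>v y) = (\<Sum>i<n. \<Sum>j<m. cnj (x$i) * A $$ (i,j) * y $ j)"
    unfolding cinner_def using assms by (simp add: row_scalar_prod_sum sum_distrib_left mult.assoc)
  also have "\<dots> = (\<Sum>j<m. \<Sum>i<n. cnj (x$i) * A $$ (i,j) * y $ j)"
    by (rule sum.swap)
  also have "\<dots> = cinner (mat_adjoint A *\<^sub>v x) y"
    unfolding cinner_def using assms
    by (auto simp: row_scalar_prod_sum[of "mat_adjoint A" m n] sum_distrib_left sum_distrib_right mult_ac
        intro!: sum.cong)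
  finally show ?thesis .
qed

lemma cinner_cnj: "dim_vec x = dim_vec y \<Longrightarrow> cnj (cinner x y) = cinner y x"
  unfolding cinner_def by (simp add: mult.commute)

lemma cinner_add_right:
  "x \<in> carrier_vec n \<Longrightarrow> y \<in> carrier_vec n \<Longrightarrow> z \<in> carrier_vec n \<Longrightarrow>
   cinner x (y + z) = cinner x y + cinner x z"
  unfolding cinner_def by (auto simp: distrib_left sum.distrib)

lemma cinner_add_mult_mat_vec:
  assumes "A \<in> carrier_mat n n" "B \<in> carrier_mat n n" "x \<in> carrier_vec n"
  shows "cinner x ((A + B) *\<^sub>v x) = cinner x (A *\<^sub>v x) + cinner x (B *\<^sub>v x)"
  using assms by (simp add: add_mult_distrib_mat_vec[OF assms] cinner_add_right[of _ n])

lemma cinner_diff_right: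
  "x \<in> carrier_vec n \<Longrightarrow> y \<in> carrier_vec n \<Longrightarrow> z \<in> carrier_vec n \<Longrightarrow>
   cinner x (y - z) = cinner x y - cinner x z"
  unfolding cinner_def by (auto simp: right_diff_distrib sum_subtractf)

lemma cinner_diff_left:
  "x \<in> carrier_vec n \<Longrightarrow> y \<in> carrier_vec n \<Longrightarrow> z \<in> carrier_vec n \<Longrightarrow>
   cinner (x - y) z = cinner x z - cinner y z"
  unfolding cinner_def by (auto simp: left_diff_distrib sum_subtractf)

lemma cinner_smult_right: "dim_vec y = dim_vec x \<Longrightarrow> cinner x (c \<cdot>\<^sub>v y) = c * cinner x y"
  unfolding cinner_def by (auto simp: sum_distrib_left mult_ac)

lemma cinner_smult_left: "dim_vec y = dim_vec x \<Longrightarrow> cinner (c \<cdot>\<^sub>v x) y = cnj c * cinner x y"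
  unfolding cinner_def by (auto simp: sum_distrib_left mult_ac)

lemma cnj_mult_self: "cnj z * z = complex_of_real ((cmod z)\<^sup>2)"
  by (metis complex_norm_square mult.commute)

lemma cinner_self: "cinner x x = complex_of_real (\<Sum>i<dim_vec x. (cmod (x$i))\<^sup>2)"
  unfolding cinner_def cnj_mult_self of_real_sum ..

lemma Re_cinner_self: "Re (cinner x x) = (\<Sum>i<dim_vec x. (cmod (x$i))\<^sup>2)"
  by (simp add: cinner_self)

lemma cinner_self_nonneg: "Re (cinner x x) \<ge> 0"
  and Im_cinner_self: "Im (cinner x x) = 0"
  by (auto simp: cinner_self intro: sum_nonneg)

lemma cinner_self_real: "cinner x x = complex_of_real (Re (cinner x x))"
  by (simp add: complex_eq_iff Im_cinner_self)

lemma cinner_self_eq_0: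
  assumes "x \<in> carrier_vec n" "cinner x x = 0"
  shows "x = 0\<^sub>v n"
proof -
  have "(\<Sum>i<n. (cmod (x$i))\<^sup>2) = 0"
    using assms unfolding cinner_self by (simp only: of_real_eq_0_iff carrier_vecD)
  hence "\<forall>i\<in>{..<n}. (cmod (x$i))\<^sup>2 = 0" by (subst (asm) sum_nonneg_eq_0_iff) auto
  thus ?thesis using assms by (auto intro!: eq_vecI)
qed

lemma cinner_conjugate_scalar_prod: "dim_vec v = dim_vec w \<Longrightarrow> v \<bullet>c w = cinner w v"
  unfolding cinner_def by (simp add: scalar_prod_def atLeast0LessThan mult.commute)

lemma mat_adjoint_mult_index:
  assumes "X \<in> carrier_mat n k" "Y \<in> carrier_mat n l" "i < k" "j < l"
  shows "(mat_adjoint X * Y) $$ (i,j) = cinner (col X i) (col Y j)"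
  unfolding cinner_def using assms by (simp add: scalar_prod_def atLeast0LessThan)

lemma mat_adjoint_mult_vec_index:
  assumes "G \<in> carrier_mat n n" "w \<in> carrier_vec n" "i < n"
  shows "(mat_adjoint G *\<^sub>v w) $ i = cinner (col G i) w"
  unfolding cinner_def using assms by (simp add: scalar_prod_def atLeast0LessThan)

section \<open>Unitary and Hermitian matrices\<close>

lemma unitary_matD:
  assumes "unitary_mat n U"
  shows "U \<in> carrier_mat n n" "U * mat_adjoint U = 1\<^sub>m n" "mat_adjoint U * U = 1\<^sub>m n"
  using assms unfolding unitary_mat_def by auto

lemma unitary_mat_adjoint: "unitary_mat n U \<Longrightarrow> unitary_mat n (mat_adjoint U)"
  by (auto simp: unitary_mat_def)

lemma unitary_mat_mult:
  assumes U: "unitary_mat n U" and V: "unitary_mat n V"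
  shows "unitary_mat n (U * V)"
proof -
  note UD = unitary_matD[OF U] and VD = unitary_matD[OF V]
  have aU: "mat_adjoint U \<in> carrier_mat n n" and aV: "mat_adjoint V \<in> carrier_mat n n"
    using UD(1) VD(1) by simp_all
  have "U * V * mat_adjoint (U * V) = U * ((V * mat_adjoint V) * mat_adjoint U)"
    unfolding mat_adjoint_mult[OF UD(1) VD(1)]
    by (simp only: assoc_mult_mat[OF UD(1) VD(1) mult_carrier_mat[OF aV aU]]
        assoc_mult_mat[OF VD(1) aV aU])
  also have "\<dots> = 1\<^sub>m n" by (simp add: VD(2) UD(2) left_mult_one_mat[OF aU])
  finally have 1: "U * V * mat_adjoint (U * V) = 1\<^sub>m n" .
  have "mat_adjoint (U * V) * (U * V) = mat_adjoint V * ((mat_adjoint U * U) * V)"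
    unfolding mat_adjoint_mult[OF UD(1) VD(1)]
    by (simp only: assoc_mult_mat[OF aV aU mult_carrier_mat[OF UD(1) VD(1)]]
        assoc_mult_mat[OF aU UD(1) VD(1)])
  also have "\<dots> = 1\<^sub>m n" by (simp add: UD(3) VD(3) left_mult_one_mat[OF VD(1)])
  finally have 2: "mat_adjoint (U * V) * (U * V) = 1\<^sub>m n" .
  show ?thesis unfolding unitary_mat_def using 1 2 UD(1) VD(1) by simp
qed

lemma unitary_mat_cinner:
  assumes U: "unitary_mat n U" and x: "x \<in> carrier_vec n" and y: "y \<in> carrier_vec n"
  shows "cinner (U *\<^sub>v x) (U *\<^sub>v y) = cinner x y"
proof -
  note UD = unitary_matD[OF U]
  have "cinner (U *\<^sub>v x) (U *\<^sub>v y) = cinner (mat_adjoint U *\<^sub>v (U *\<^sub>v x)) y"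
    using UD(1) x y by (subst cinner_adjoint[symmetric, of _ n n]) auto
  also have "mat_adjoint U *\<^sub>v (U *\<^sub>v x) = (mat_adjoint U * U) *\<^sub>v x"
    using UD(1) x by (subst assoc_mult_mat_vec) auto
  also have "\<dots> = x" using UD(3) x by simp
  finally show ?thesis .
qed

lemma unitary_mat_mult_vec_cancel:
  assumes U: "unitary_mat n U" and v: "v \<in> carrier_vec n"
  shows "mat_adjoint U *\<^sub>v (U *\<^sub>v v) = v" "U *\<^sub>v (mat_adjoint U *\<^sub>v v) = v"
proof -
  note UD = unitary_matD[OF U]
  have "mat_adjoint U *\<^sub>v (U *\<^sub>v v) = (mat_adjoint U * U) *\<^sub>v v"
    using UD(1) v by (subst assoc_mult_mat_vec) auto
  thus "mat_adjoint U *\<^sub>v (U *\<^sub>v v) = v" using UD(3) v by simp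
  have "U *\<^sub>v (mat_adjoint U *\<^sub>v v) = (U * mat_adjoint U) *\<^sub>v v"
    using UD(1) v by (subst assoc_mult_mat_vec) auto
  thus "U *\<^sub>v (mat_adjoint U *\<^sub>v v) = v" using UD(2) v by simp
qed

lemma unitary_mat_col_cinner:
  assumes "unitary_mat n U" "i < n" "j < n"
  shows "cinner (col U i) (col U j) = (if i = j then 1 else 0)"
  using mat_adjoint_mult_index[of U n n U n i j] unitary_matD[OF assms(1)] assms(2,3) by simp

lemma unitary_mat_adjoint_mult_col:
  assumes U: "unitary_mat n U" and i: "i < n"
  shows "mat_adjoint U *\<^sub>v col U i = unit_vec n i"
proof -
  note UD = unitary_matD[OF U]
  have "mat_adjoint U *\<^sub>v col U i = col (mat_adjoint U * U) i"
    using UD(1) i by (simp add: col_mult2[of _ n n _ n])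
  thus ?thesis using UD(3) i by simp
qed

lemma unitary_mat_conjugate_cancel:
  assumes W: "unitary_mat n W" and A: "A \<in> carrier_mat n n"
  shows "W * (mat_adjoint W * A * W) * mat_adjoint W = A"
proof -
  note WD = unitary_matD[OF W]
  have "W * (mat_adjoint W * A * W) * mat_adjoint W = (W * mat_adjoint W) * A * (W * mat_adjoint W)"
    using WD(1) A by (simp add: assoc_mult_mat[of _ n n _ n _ n])
  thus ?thesis using WD A by simp
qed

lemma mult_conjugate_adjoint:
  fixes W E R :: "complex mat"
  assumes "W \<in> carrier_mat n n" "E \<in> carrier_mat n n" "R \<in> carrier_mat n n"
  shows "W * (E * R * mat_adjoint E) * mat_adjoint W = (W * E) * R * mat_adjoint (W * E)"
  using assms by (simp add: mat_adjoint_mult[of W n n E n] assoc_mult_mat[of _ n n _ n _ n])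

definition hermitian_mat :: "complex mat \<Rightarrow> bool" where
  "hermitian_mat A \<longleftrightarrow> mat_adjoint A = A"

lemma hermitian_mat_index:
  "hermitian_mat A \<Longrightarrow> i < dim_row A \<Longrightarrow> j < dim_col A \<Longrightarrow> A $$ (i,j) = cnj (A $$ (j,i))"
  unfolding hermitian_mat_def by (metis mat_adjoint_dim mat_adjoint_index)

lemma hermitian_mat_cinner:
  assumes "hermitian_mat A" "A \<in> carrier_mat n n" "v \<in> carrier_vec n" "w \<in> carrier_vec n"
  shows "cinner v (A *\<^sub>v w) = cinner (A *\<^sub>v v) w"
  using cinner_adjoint[OF assms(2,3,4)] assms(1) unfolding hermitian_mat_def by simp

lemma cinner_mat_adjoint_mult_mult:
  assumes "X \<in> carrier_mat n k" "A \<in> carrier_mat n n" "Y \<in> carrier_mat n l" "i < k" "j < l"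
  shows "(mat_adjoint X * A * Y) $$ (i,j) = cinner (col X i) (A *\<^sub>v col Y j)"
proof -
  have "(mat_adjoint X * A * Y) $$ (i,j) = (mat_adjoint X * (A * Y)) $$ (i,j)"
    using assms by (subst assoc_mult_mat) auto
  also have "\<dots> = (\<Sum>p<n. cnj (X $$ (p,i)) * (A * Y) $$ (p,j))"
    using assms by (auto simp: scalar_prod_def atLeast0LessThan intro: sum.cong)
  also have "\<dots> = cinner (col X i) (A *\<^sub>v col Y j)"
    unfolding cinner_def using assms by (auto simp: scalar_prod_def atLeast0LessThan intro!: sum.cong)
  finally show ?thesis .
qed

section \<open>The spectral theorem\<close>

definition diag_cons :: "nat \<Rightarrow> complex \<Rightarrow> complex mat \<Rightarrow> complex mat" where
  "diag_cons n c X = mat (Suc n) (Suc n)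
     (\<lambda>(i,j). if i = 0 \<and> j = 0 then c else if i = 0 \<or> j = 0 then 0 else X $$ (i - 1, j - 1))"

lemma diag_cons_carrier [simp]: "diag_cons n c X \<in> carrier_mat (Suc n) (Suc n)"
  and diag_cons_dim [simp]: "dim_row (diag_cons n c X) = Suc n" "dim_col (diag_cons n c X) = Suc n"
  unfolding diag_cons_def by simp_all

lemma diag_cons_index [simp]:
  "diag_cons n c X $$ (0,0) = c"
  "j < n \<Longrightarrow> diag_cons n c X $$ (0, Suc j) = 0"
  "i < n \<Longrightarrow> diag_cons n c X $$ (Suc i, 0) = 0"
  "i < n \<Longrightarrow> j < n \<Longrightarrow> diag_cons n c X $$ (Suc i, Suc j) = X $$ (i,j)"
  unfolding diag_cons_def by simp_all

lemma eq_mat_SucI: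
  assumes "A \<in> carrier_mat (Suc n) (Suc n)" "B \<in> carrier_mat (Suc n) (Suc n)"
    and "A $$ (0,0) = B $$ (0,0)"
    and "\<And>j. j < n \<Longrightarrow> A $$ (0, Suc j) = B $$ (0, Suc j)"
    and "\<And>i. i < n \<Longrightarrow> A $$ (Suc i, 0) = B $$ (Suc i, 0)"
    and "\<And>i j. i < n \<Longrightarrow> j < n \<Longrightarrow> A $$ (Suc i, Suc j) = B $$ (Suc i, Suc j)"
  shows "A = B"
proof (rule eq_matI)
  fix i j assume "i < dim_row B" "j < dim_col B"
  hence ij: "i < Suc n" "j < Suc n" using assms(2) by simp_all
  show "A $$ (i, j) = B $$ (i, j)"
  proof (cases i)
    case 0 thus ?thesis using ij assms(3,4) by (cases j) simp_all
  next
    case (Suc i') thus ?thesis using ij assms(5,6) by (cases j) simp_all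
  qed
qed (use assms in simp_all)

lemma diag_cons_mult:
  assumes X: "X \<in> carrier_mat n n" and Y: "Y \<in> carrier_mat n n"
  shows "diag_cons n a X * diag_cons n b Y = diag_cons n (a * b) (X * Y)"
proof (rule eq_mat_SucI[of _ n])
  show "diag_cons n a X * diag_cons n b Y \<in> carrier_mat (Suc n) (Suc n)"
    by (rule mult_carrier_mat[OF diag_cons_carrier diag_cons_carrier])
qed (use X Y in \<open>simp_all del: sum.op_ivl_Suc sum.lessThan_Suc
      add: scalar_prod_def atLeast0LessThan sum.lessThan_Suc_shift\<close>)

lemma diag_cons_adjoint:
  "X \<in> carrier_mat n n \<Longrightarrow> mat_adjoint (diag_cons n a X) = diag_cons n (cnj a) (mat_adjoint X)"
  by (rule eq_mat_SucI[of _ n]) simp_all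

lemma diag_cons_one: "diag_cons n 1 (1\<^sub>m n) = 1\<^sub>m (Suc n)"
  by (rule eq_mat_SucI[of _ n]) simp_all

lemma diag_cons_rdiag: "length d = n \<Longrightarrow> diag_cons n (complex_of_real r) (rdiag d) = rdiag (r # d)"
  by (rule eq_mat_SucI[of _ n]) (use rdiag_carrier[of "r # d"] in simp_all)

lemma diag_cons_unitary:
  assumes U: "unitary_mat n U"
  shows "unitary_mat (Suc n) (diag_cons n 1 U)"
proof -
  note UD = unitary_matD[OF U]
  have aU: "mat_adjoint U \<in> carrier_mat n n" using UD by simp
  show ?thesis unfolding unitary_mat_def diag_cons_adjoint[OF UD(1)]
    by (simp add: diag_cons_mult[OF UD(1) aU] diag_cons_mult[OF aU UD(1)] UD(2,3) diag_cons_one)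
qed

definition vec_normalize :: "complex vec \<Rightarrow> complex vec" where
  "vec_normalize v = (1 / complex_of_real (sqrt (Re (cinner v v)))) \<cdot>\<^sub>v v"

lemma vec_normalize_carrier [simp]: "vec_normalize v \<in> carrier_vec n \<longleftrightarrow> v \<in> carrier_vec n"
  and vec_normalize_dim [simp]: "dim_vec (vec_normalize v) = dim_vec v"
  unfolding vec_normalize_def by simp_all

lemma cinner_vec_normalize:
  "dim_vec v = dim_vec w \<Longrightarrow> cinner (vec_normalize v) (vec_normalize w) =
     cinner v w / complex_of_real (sqrt (Re (cinner v v)) * sqrt (Re (cinner w w)))"
  unfolding vec_normalize_def by (simp add: cinner_smult_left cinner_smult_right)

lemma cinner_vec_normalize_self:
  assumes "cinner v v \<noteq> 0"
  shows "cinner (vec_normalize v) (vec_normalize v) = 1"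
proof -
  have pos: "Re (cinner v v) > 0"
    using assms cinner_self_nonneg[of v] cinner_self_real[of v] by (metis less_eq_real_def of_real_0)
  have "cinner (vec_normalize v) (vec_normalize v) = cinner v v / complex_of_real (Re (cinner v v))"
    using pos by (simp add: cinner_vec_normalize)
  also have "\<dots> = 1" using pos by (subst cinner_self_real) simp
  finally show ?thesis .
qed

lemma vec_normalize_unit: "cinner v v = 1 \<Longrightarrow> vec_normalize v = v"
  unfolding vec_normalize_def by simp

lemma eigenvector_exists:
  assumes A: "(A :: complex mat) \<in> carrier_mat n n" and n: "n > 0"
  shows "\<exists>l v. v \<in> carrier_vec n \<and> v \<noteq> 0\<^sub>v n \<and> A *\<^sub>v v = l \<cdot>\<^sub>v v"
proof -
  obtain es where cp: "char_poly A = (\<Prod>a\<leftarrow>es. [:- a, 1:])" and len: "length es = n"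
    using char_poly_factorized[OF A] by blast
  then obtain l rest where "es = l # rest" using n by (cases es) auto
  hence "poly (char_poly A) l = 0" unfolding cp by simp
  hence "eigenvalue A l" using eigenvalue_root_char_poly[OF A] by simp
  then obtain v where "eigenvector A v l" unfolding eigenvalue_def by blast
  thus ?thesis unfolding eigenvector_def using A by auto
qed

lemma orthonormal_list_with_first:
  assumes v: "v \<in> carrier_vec (Suc m)" and v1: "cinner v v = 1"
  shows "\<exists>us. length us = Suc m \<and> us ! 0 = v \<and> set us \<subseteq> carrier_vec (Suc m) \<and>
    (\<forall>i<Suc m. \<forall>j<Suc m. cinner (us ! i) (us ! j) = (if i = j then 1 else 0))"
proof -
  interpret cof_vec_space "Suc m" "TYPE(complex)" .
  have v0: "v \<noteq> 0\<^sub>v (Suc m)" using v1 by (auto simp: cinner_def)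
  define b where "b = basis_completion v"
  note bc = basis_completion[OF v v0, folded b_def]
  define ws where "ws = gram_schmidt (Suc m) b"
  note gs = gram_schmidt_result[OF bc(2) bc(4) bc(5) ws_def]
  have len: "length ws = Suc m" using gs(4) bc(6) by simp
  have "b = v # tl b" unfolding b_def basis_completion_def Let_def by simp
  hence "hd ws = v" unfolding ws_def by (metis gram_schmidt_hd[OF v])
  hence ws0: "ws ! 0 = v" using len by (cases ws) auto
  have wsc: "ws ! i \<in> carrier_vec (Suc m)" if "i < Suc m" for i using gs(3) len that by auto
  define us where "us = map vec_normalize ws"
  have "cinner (us ! i) (us ! j) = (if i = j then 1 else 0)" if ij: "i < Suc m" "j < Suc m" for i j
  proof (cases "i = j")
    case True
    have "ws ! i \<bullet>c ws ! i \<noteq> 0" using corthogonalD[OF gs(2), of i i] ij len by simp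
    hence "cinner (ws ! i) (ws ! i) \<noteq> 0" by (simp add: cinner_conjugate_scalar_prod)
    thus ?thesis using True ij len unfolding us_def by (simp add: cinner_vec_normalize_self)
  next
    case False
    have "ws ! j \<bullet>c ws ! i = 0" using corthogonalD[OF gs(2), of j i] ij len False by simp
    hence "cinner (ws ! i) (ws ! j) = 0"
      using wsc[OF ij(1)] wsc[OF ij(2)] by (simp add: cinner_conjugate_scalar_prod)
    thus ?thesis
      using False ij len wsc[OF ij(1)] wsc[OF ij(2)] unfolding us_def by (simp add: cinner_vec_normalize)
  qed
  moreover have "set us \<subseteq> carrier_vec (Suc m)"
    unfolding us_def using wsc len by (auto simp: in_set_conv_nth)
  moreover have "us ! 0 = v" "length us = Suc m"
    using ws0 len vec_normalize_unit[OF v1] unfolding us_def by simp_all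
  ultimately show ?thesis by blast
qed

lemma unitary_mat_of_cols:
  assumes len: "length us = n" and us: "set us \<subseteq> carrier_vec n"
    and orth: "\<And>i j. i < n \<Longrightarrow> j < n \<Longrightarrow> cinner (us ! i) (us ! j) = (if i = j then 1 else 0)"
  shows "unitary_mat n (mat_of_cols n us)"
proof -
  define W where "W = mat_of_cols n us"
  have W: "W \<in> carrier_mat n n" unfolding W_def using len mat_of_cols_carrier(1)[of n us] by simp
  have colW: "col W i = us ! i" if "i < n" for i
    unfolding W_def using that len us nth_mem by (intro col_mat_of_cols) auto
  have WW: "mat_adjoint W * W = 1\<^sub>m n"
  proof (rule eq_matI)
    fix i j assume "i < dim_row (1\<^sub>m n :: complex mat)" "j < dim_col (1\<^sub>m n :: complex mat)"
    hence ij: "i < n" "j < n" by simp_all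
    show "(mat_adjoint W * W) $$ (i, j) = 1\<^sub>m n $$ (i, j)"
      using mat_adjoint_mult_index[OF W W ij] colW ij orth[OF ij] by simp
  qed (use W in simp_all)
  moreover have "W * mat_adjoint W = 1\<^sub>m n"
    using WW by (rule mat_mult_left_right_inverse[OF mat_adjoint_carrier[OF W] W])
  ultimately show ?thesis using W unfolding unitary_mat_def W_def by blast
qed

lemma unitary_mat_eigenvector_first_col:
  assumes A: "(A :: complex mat) \<in> carrier_mat (Suc m) (Suc m)"
  shows "\<exists>W l. unitary_mat (Suc m) W \<and> A *\<^sub>v col W 0 = l \<cdot>\<^sub>v col W 0"
proof -
  obtain l v where v: "v \<in> carrier_vec (Suc m)" "v \<noteq> 0\<^sub>v (Suc m)" and Av: "A *\<^sub>v v = l \<cdot>\<^sub>v v"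
    using eigenvector_exists[OF A] by blast
  define u where "u = vec_normalize v"
  have u: "u \<in> carrier_vec (Suc m)" unfolding u_def using v(1) by simp
  have "cinner v v \<noteq> 0" using cinner_self_eq_0[OF v(1)] v(2) by blast
  hence "cinner u u = 1" unfolding u_def by (rule cinner_vec_normalize_self)
  then obtain us where us: "length us = Suc m" "us ! 0 = u" "set us \<subseteq> carrier_vec (Suc m)"
    and orth: "\<forall>i<Suc m. \<forall>j<Suc m. cinner (us ! i) (us ! j) = (if i = j then 1 else 0)"
    using orthonormal_list_with_first[OF u] by blast
  have "col (mat_of_cols (Suc m) us) 0 = u" using us u by (subst col_mat_of_cols) simp_all
  moreover have "A *\<^sub>v u = l \<cdot>\<^sub>v u"
    unfolding u_def vec_normalize_def using A v Av by (simp add: mult_mat_vec smult_smult_assoc mult.commute)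
  ultimately show ?thesis using unitary_mat_of_cols[OF us(1,3)] orth by metis
qed

lemma hermitian_mat_deflate:
  assumes A: "A \<in> carrier_mat (Suc m) (Suc m)" and hA: "hermitian_mat A"
    and W: "unitary_mat (Suc m) W" and Av: "A *\<^sub>v col W 0 = l \<cdot>\<^sub>v col W 0"
  shows "\<exists>A' \<in> carrier_mat m m. hermitian_mat A' \<and>
    mat_adjoint W * A * W = diag_cons m (complex_of_real (Re l)) A'"
proof -
  note WD = unitary_matD[OF W]
  define B where "B = mat_adjoint W * A * W"
  have Bc: "B \<in> carrier_mat (Suc m) (Suc m)" unfolding B_def using WD(1) A by simp
  have hB: "hermitian_mat B"
  proof -
    have "mat_adjoint B = mat_adjoint W * mat_adjoint (mat_adjoint W * A)"
      unfolding B_def by (subst mat_adjoint_mult[of _ "Suc m" "Suc m"]) (use WD(1) A in simp_all)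
    also have "mat_adjoint (mat_adjoint W * A) = A * W"
      using WD(1) A hA by (subst mat_adjoint_mult[of _ "Suc m" "Suc m"]) (simp_all add: hermitian_mat_def)
    also have "mat_adjoint W * (A * W) = B"
      unfolding B_def by (rule assoc_mult_mat[symmetric, OF mat_adjoint_carrier[OF WD(1)] A WD(1)])
    finally show ?thesis unfolding hermitian_mat_def .
  qed
  have hB_index: "B $$ (i,j) = cnj (B $$ (j,i))" if "i < Suc m" "j < Suc m" for i j
    by (rule hermitian_mat_index[OF hB]) (use Bc that in simp_all)
  have Bi0: "B $$ (i,0) = (if i = 0 then l else 0)" if "i < Suc m" for i
    using cinner_mat_adjoint_mult_mult[OF WD(1) A WD(1) that, of 0] Av
      unitary_mat_col_cinner[OF W that, of 0] WD(1)
    by (simp add: B_def cinner_smult_right)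
  have B0j: "B $$ (0,j) = (if j = 0 then cnj l else 0)" if "j < Suc m" for j
    using hB_index[OF _ that, of 0] Bi0[OF that] by simp
  have l: "l = complex_of_real (Re l)"
    using B0j[of 0] Bi0[of 0] by (simp add: complex_eq_iff)
  define A' where "A' = mat m m (\<lambda>(i,j). B $$ (Suc i, Suc j))"
  have "hermitian_mat A'"
    unfolding hermitian_mat_def
    by (rule eq_matI) (use hB_index[symmetric] in \<open>simp_all add: A'_def\<close>)
  moreover have "B = diag_cons m (complex_of_real (Re l)) A'"
    by (rule eq_mat_SucI[of _ m]) (use Bc Bi0 B0j l in \<open>simp_all add: A'_def\<close>)
  ultimately show ?thesis unfolding B_def A'_def by auto
qed

lemma diag_cons_spectral:
  assumes U: "unitary_mat m U" and d: "length d = m"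
  shows "diag_cons m (complex_of_real r) (U * rdiag d * mat_adjoint U) =
    diag_cons m 1 U * rdiag (r # d) * mat_adjoint (diag_cons m 1 U)"
proof -
  note UD = unitary_matD[OF U]
  have R: "rdiag d \<in> carrier_mat m m" using d rdiag_carrier[of d] by simp
  show ?thesis
    unfolding diag_cons_rdiag[OF d, symmetric] diag_cons_adjoint[OF UD(1)]
    by (simp add: diag_cons_mult[OF UD(1) R]
        diag_cons_mult[OF mult_carrier_mat_square[OF UD(1) R] mat_adjoint_carrier[OF UD(1)]])
qed

theorem hermitian_spectral_decomposition:
  assumes "A \<in> carrier_mat n n" "hermitian_mat A"
  shows "\<exists>U d. unitary_mat n U \<and> length d = n \<and> A = U * rdiag d * mat_adjoint U"
  using assms
proof (induction n arbitrary: A)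
  case 0
  have "unitary_mat 0 (1\<^sub>m 0)" unfolding unitary_mat_def by simp
  moreover have "A = 1\<^sub>m 0 * rdiag [] * mat_adjoint (1\<^sub>m 0)"
    by (rule eq_matI) (use 0 in simp_all)
  ultimately show ?case by (intro exI[of _ "1\<^sub>m 0"] exI[of _ "[]"]) simp
next
  case (Suc m A)
  note A = Suc.prems(1)
  obtain W l where W: "unitary_mat (Suc m) W" and Wl: "A *\<^sub>v col W 0 = l \<cdot>\<^sub>v col W 0"
    using unitary_mat_eigenvector_first_col[OF A] by blast
  obtain A' where A': "A' \<in> carrier_mat m m" "hermitian_mat A'"
    and WAW: "mat_adjoint W * A * W = diag_cons m (complex_of_real (Re l)) A'"
    using hermitian_mat_deflate[OF A Suc.prems(2) W Wl] by blast
  obtain U d where U: "unitary_mat m U" and d: "length d = m" and A'_eq: "A' = U * rdiag d * mat_adjoint U"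
    using Suc.IH[OF A'] by blast
  define E where "E = diag_cons m 1 U"
  have E: "unitary_mat (Suc m) E" unfolding E_def by (rule diag_cons_unitary[OF U])
  have "A = W * (mat_adjoint W * A * W) * mat_adjoint W"
    using unitary_mat_conjugate_cancel[OF W A] by simp
  also have "\<dots> = W * (E * rdiag (Re l # d) * mat_adjoint E) * mat_adjoint W"
    unfolding WAW A'_eq E_def diag_cons_spectral[OF U d] ..
  also have "\<dots> = (W * E) * rdiag (Re l # d) * mat_adjoint (W * E)"
    using unitary_matD(1)[OF W] unitary_matD(1)[OF E] d rdiag_carrier[of "Re l # d"]
    by (intro mult_conjugate_adjoint) simp_all
  finally show ?case using unitary_mat_mult[OF W E] d by (intro exI[of _ "W * E"] exI[of _ "Re l # d"]) simp
qed

section \<open>Positive semidefinite matrices and the functional calculus\<close>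

definition psd_mat :: "nat \<Rightarrow> complex mat \<Rightarrow> bool" where
  "psd_mat n A \<longleftrightarrow> A \<in> carrier_mat n n \<and> hermitian_mat A \<and> (\<forall>x\<in>carrier_vec n. 0 \<le> Re (cinner x (A *\<^sub>v x)))"

lemma psd_matD:
  assumes "psd_mat n A"
  shows "A \<in> carrier_mat n n" "hermitian_mat A" "x \<in> carrier_vec n \<Longrightarrow> 0 \<le> Re (cinner x (A *\<^sub>v x))"
  using assms unfolding psd_mat_def by auto

lemma cinner_spectral:
  assumes U: "unitary_mat n U" and d: "length d = n" and x: "x \<in> carrier_vec n"
  shows "cinner x ((U * rdiag d * mat_adjoint U) *\<^sub>v x) =
    complex_of_real (\<Sum>i<n. d!i * (cmod ((mat_adjoint U *\<^sub>v x) $ i))\<^sup>2)"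
proof -
  note UD = unitary_matD[OF U]
  have R: "rdiag d \<in> carrier_mat n n" using d rdiag_carrier[of d] by simp
  define z where "z = mat_adjoint U *\<^sub>v x"
  have z: "z \<in> carrier_vec n" unfolding z_def using UD(1) x by simp
  have "(U * rdiag d * mat_adjoint U) *\<^sub>v x = U *\<^sub>v (rdiag d *\<^sub>v z)"
    unfolding z_def using UD(1) R x
    by (simp add: assoc_mult_mat_vec[of _ n n _ n] assoc_mult_mat[of _ n n _ n _ n])
  hence "cinner x ((U * rdiag d * mat_adjoint U) *\<^sub>v x) = cinner z (rdiag d *\<^sub>v z)"
    using cinner_adjoint[OF UD(1) x, of "rdiag d *\<^sub>v z"] z R unfolding z_def by simp
  also have "\<dots> = (\<Sum>i<n. complex_of_real (d!i) * (cnj (z$i) * z$i))"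
    unfolding cinner_def using z d by (intro sum.cong) (simp_all del: index_mult_mat_vec)
  also have "\<dots> = complex_of_real (\<Sum>i<n. d!i * (cmod (z$i))\<^sup>2)"
    by (simp add: cnj_mult_self of_real_sum)
  finally show ?thesis unfolding z_def .
qed

lemma spectral_col_eigenvector:
  assumes U: "unitary_mat n U" and d: "length d = n" and i: "i < n"
  shows "(U * rdiag d * mat_adjoint U) *\<^sub>v col U i = complex_of_real (d!i) \<cdot>\<^sub>v col U i"
proof -
  note UD = unitary_matD[OF U]
  have R: "rdiag d \<in> carrier_mat n n" using d rdiag_carrier[of d] by simp
  have "(U * rdiag d * mat_adjoint U) *\<^sub>v col U i = U *\<^sub>v (rdiag d *\<^sub>v unit_vec n i)"
    using UD(1) R unitary_mat_adjoint_mult_col[OF U i]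
    by (simp add: assoc_mult_mat_vec[of _ n n _ n] assoc_mult_mat[of _ n n _ n _ n])
  also have "rdiag d *\<^sub>v unit_vec n i = complex_of_real (d!i) \<cdot>\<^sub>v unit_vec n i"
    by (rule eq_vecI) (use d i in simp_all)
  also have "U *\<^sub>v (complex_of_real (d!i) \<cdot>\<^sub>v unit_vec n i) = complex_of_real (d!i) \<cdot>\<^sub>v col U i"
    using UD(1) i by (simp add: mult_mat_vec mult_unit_vec[OF UD(1) i])
  finally show ?thesis .
qed

lemma spectral_hermitian:
  assumes U: "unitary_mat n U" and d: "length d = n"
  shows "hermitian_mat (U * rdiag d * mat_adjoint U)"
proof -
  note UD = unitary_matD[OF U]
  have R: "rdiag d \<in> carrier_mat n n" using d rdiag_carrier[of d] by simp
  show ?thesis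
    unfolding hermitian_mat_def using UD(1) R
    by (simp add: mat_adjoint_mult[of _ n n _ n] assoc_mult_mat[of _ n n _ n _ n])
qed

lemma spectral_psd_mat:
  assumes U: "unitary_mat n U" and d: "length d = n" and nonneg: "\<forall>i<n. d!i \<ge> 0"
  shows "psd_mat n (U * rdiag d * mat_adjoint U)"
  unfolding psd_mat_def
  using spectral_hermitian[OF U d] unitary_matD(1)[OF U] d rdiag_carrier[of d] nonneg
  by (auto simp: cinner_spectral[OF U d] intro!: sum_nonneg)

lemma psd_mat_spectral:
  assumes A: "psd_mat n A"
  shows "\<exists>U d. unitary_mat n U \<and> length d = n \<and> (\<forall>i<n. d!i \<ge> 0) \<and> A = U * rdiag d * mat_adjoint U"
proof -
  obtain U d where U: "unitary_mat n U" and d: "length d = n" and A_eq: "A = U * rdiag d * mat_adjoint U"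
    using hermitian_spectral_decomposition psd_matD(1,2)[OF A] by blast
  have "d!i \<ge> 0" if i: "i < n" for i
  proof -
    have "cinner (col U i) (A *\<^sub>v col U i) = complex_of_real (d!i) * cinner (col U i) (col U i)"
      unfolding A_eq spectral_col_eigenvector[OF U d i] by (rule cinner_smult_right) simp
    thus ?thesis
      using psd_matD(3)[OF A, of "col U i"] unitary_mat_col_cinner[OF U i i] unitary_matD(1)[OF U]
      by simp
  qed
  thus ?thesis using U d A_eq by blast
qed

lemma psd_specD:
  assumes "psd_spec A (U, d)" "A \<in> carrier_mat n n"
  shows "unitary_mat n U" "length d = n" "\<forall>i<n. d!i \<ge> 0" "A = U * rdiag d * mat_adjoint U"
  using assms unfolding psd_spec_def Let_def by auto

lemma psd_mat_psd_spec:
  assumes "psd_mat n A" "unitary_mat n U" "length d = n" "\<forall>i<n. d!i \<ge> 0" "A = U * rdiag d * mat_adjoint U"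
  shows "psd_spec A (U, d)"
  using assms psd_matD(1)[OF assms(1)] unfolding psd_spec_def Let_def by auto

lemma psd_spec_psd_decomp:
  assumes "psd_mat n A"
  shows "psd_spec A (psd_decomp A)"
  unfolding psd_decomp_def
  using psd_mat_spectral[OF assms] psd_mat_psd_spec[OF assms] by (metis someI)

lemma psd_decompD:
  assumes "psd_mat n A" "psd_decomp A = (U, d)"
  shows "unitary_mat n U" "length d = n" "\<forall>i<n. d!i \<ge> 0" "A = U * rdiag d * mat_adjoint U"
  using psd_specD[OF psd_spec_psd_decomp[OF assms(1), unfolded assms(2)] psd_matD(1)[OF assms(1)]]
  by auto

lemma rpow_nonneg: "x \<ge> 0 \<Longrightarrow> rpow x r \<ge> 0"
  unfolding rpow_def by simp

lemma rpow_pos: "x > 0 \<Longrightarrow> rpow x r = x powr r"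
  unfolding rpow_def by simp

lemma rpow_half: "x \<ge> 0 \<Longrightarrow> rpow x (1/2) = sqrt x"
  unfolding rpow_def by (simp add: powr_half_sqrt)

lemma psd_pow_eq: "psd_decomp A = (U, d) \<Longrightarrow> psd_pow A r = U * rdiag (map (\<lambda>x. rpow x r) d) * mat_adjoint U"
  unfolding psd_pow_def by simp

lemma psd_mat_psd_pow:
  assumes "psd_mat n A"
  shows "psd_mat n (psd_pow A r)"
proof -
  obtain U d where ud: "psd_decomp A = (U, d)" by fastforce
  note D = psd_decompD[OF assms ud]
  show ?thesis unfolding psd_pow_eq[OF ud]
    by (rule spectral_psd_mat[OF D(1)]) (use D(2,3) in \<open>simp_all add: rpow_nonneg\<close>)
qed

lemma spectral_map_eigenvector:
  assumes U: "unitary_mat n U" and d: "length d = n" and u: "u \<in> carrier_vec n"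
    and Au: "(U * rdiag d * mat_adjoint U) *\<^sub>v u = complex_of_real \<mu> \<cdot>\<^sub>v u"
  shows "(U * rdiag (map f d) * mat_adjoint U) *\<^sub>v u = complex_of_real (f \<mu>) \<cdot>\<^sub>v u"
proof -
  note UD = unitary_matD[OF U]
  have R: "rdiag d' \<in> carrier_mat n n" if "length d' = n" for d' :: "real list"
    using that rdiag_carrier[of d'] by simp
  define z where "z = mat_adjoint U *\<^sub>v u"
  have z: "z \<in> carrier_vec n" unfolding z_def using UD(1) u by simp
  have conj: "(U * rdiag d' * mat_adjoint U) *\<^sub>v u = U *\<^sub>v (rdiag d' *\<^sub>v z)" if "length d' = n" for d'
    unfolding z_def using UD(1) R[OF that] u
    by (simp add: assoc_mult_mat_vec[of _ n n _ n] assoc_mult_mat[of _ n n _ n _ n])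
  have "U *\<^sub>v (rdiag d *\<^sub>v z) = complex_of_real \<mu> \<cdot>\<^sub>v u"
    using conj[OF d] Au by simp
  hence "mat_adjoint U *\<^sub>v (U *\<^sub>v (rdiag d *\<^sub>v z)) = complex_of_real \<mu> \<cdot>\<^sub>v z"
    unfolding z_def by (simp add: mult_mat_vec[OF mat_adjoint_carrier[OF UD(1)] u])
  hence Dz: "rdiag d *\<^sub>v z = complex_of_real \<mu> \<cdot>\<^sub>v z"
    using unitary_mat_mult_vec_cancel(1)[OF U, of "rdiag d *\<^sub>v z"] R[OF d] z by simp
  have "rdiag (map f d) *\<^sub>v z = complex_of_real (f \<mu>) \<cdot>\<^sub>v z"
  proof (rule eq_vecI)
    fix i assume "i < dim_vec (complex_of_real (f \<mu>) \<cdot>\<^sub>v z)"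
    hence i: "i < n" using z by simp
    have "complex_of_real (d!i) * z$i = complex_of_real \<mu> * z$i"
      using arg_cong[OF Dz, of "\<lambda>v. v $ i"] i z d by (simp del: index_mult_mat_vec)
    hence "z$i = 0 \<or> d!i = \<mu>" by simp
    thus "(rdiag (map f d) *\<^sub>v z) $ i = (complex_of_real (f \<mu>) \<cdot>\<^sub>v z) $ i"
      using i z d by (auto simp del: index_mult_mat_vec)
  qed (use z d in simp)
  thus ?thesis
    unfolding conj[of "map f d", OF length_map[of f d, unfolded d]]
    using UD(1) z unitary_mat_mult_vec_cancel(2)[OF U u] by (simp add: mult_mat_vec z_def)
qed

lemma mult_eq_mult_rdiag_if_eigenvectors:
  assumes A: "A \<in> carrier_mat n n" and Y: "Y \<in> carrier_mat n n" and a: "length a = n"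
    and AY: "\<And>i. i < n \<Longrightarrow> A *\<^sub>v col Y i = complex_of_real (a!i) \<cdot>\<^sub>v col Y i"
  shows "A * Y = Y * rdiag a"
proof (rule eq_matI)
  fix k i assume "k < dim_row (Y * rdiag a)" "i < dim_col (Y * rdiag a)"
  hence ki: "k < n" "i < n" using Y a by simp_all
  have "(A * Y) $$ (k,i) = (A *\<^sub>v col Y i) $ k" using A Y ki by simp
  also have "\<dots> = complex_of_real (a!i) * Y $$ (k,i)" unfolding AY[OF ki(2)] using Y ki by simp
  also have "\<dots> = (Y * rdiag a) $$ (k,i)" using mult_rdiag_index[of Y n a k i] Y a ki by simp
  finally show "(A * Y) $$ (k,i) = (Y * rdiag a) $$ (k,i)" .
qed (use A Y a in simp_all)

lemma spectral_if_eigenvectors: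
  assumes Y: "unitary_mat n Y" and A: "A \<in> carrier_mat n n" and a: "length a = n"
    and AY: "\<And>i. i < n \<Longrightarrow> A *\<^sub>v col Y i = complex_of_real (a!i) \<cdot>\<^sub>v col Y i"
  shows "A = Y * rdiag a * mat_adjoint Y"
proof -
  note YD = unitary_matD[OF Y]
  have "A = A * (Y * mat_adjoint Y)" using YD(2) A by simp
  also have "\<dots> = (A * Y) * mat_adjoint Y" using A YD(1) by (simp add: assoc_mult_mat[of _ n n _ n _ n])
  also have "A * Y = Y * rdiag a" by (rule mult_eq_mult_rdiag_if_eigenvectors[OF A YD(1) a AY])
  finally show ?thesis .
qed

lemma psd_pow_eigenvector:
  assumes A: "psd_mat n A" and u: "u \<in> carrier_vec n" and Au: "A *\<^sub>v u = complex_of_real \<mu> \<cdot>\<^sub>v u"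
  shows "psd_pow A r *\<^sub>v u = complex_of_real (rpow \<mu> r) \<cdot>\<^sub>v u"
proof -
  obtain U d where ud: "psd_decomp A = (U, d)" by fastforce
  note D = psd_decompD[OF A ud]
  show ?thesis unfolding psd_pow_eq[OF ud]
    by (rule spectral_map_eigenvector[OF D(1,2) u]) (use Au D(4) in simp)
qed

lemma psd_mat_adjoint_mult_self:
  assumes T: "T \<in> carrier_mat n n"
  shows "psd_mat n (mat_adjoint T * T)"
proof -
  have aT: "mat_adjoint T \<in> carrier_mat n n" using T by simp
  have "0 \<le> Re (cinner x ((mat_adjoint T * T) *\<^sub>v x))" if x: "x \<in> carrier_vec n" for x
  proof -
    have "cinner x ((mat_adjoint T * T) *\<^sub>v x) = cinner (T *\<^sub>v x) (T *\<^sub>v x)"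
      using cinner_adjoint[OF aT x, of "T *\<^sub>v x"] T x by (simp add: assoc_mult_mat_vec[of _ n n _ n])
    thus ?thesis using cinner_self_nonneg by simp
  qed
  moreover have "hermitian_mat (mat_adjoint T * T)"
    unfolding hermitian_mat_def by (simp add: mat_adjoint_mult[OF aT T])
  ultimately show ?thesis unfolding psd_mat_def using mult_carrier_mat[OF aT T] by blast
qed

lemma psd_mat_add:
  assumes A: "psd_mat n A" and B: "psd_mat n B"
  shows "psd_mat n (A + B)"
proof -
  note AD = psd_matD[OF A] and BD = psd_matD[OF B]
  have "hermitian_mat (A + B)"
    using AD(1,2) BD(1,2) unfolding hermitian_mat_def by (simp add: mat_adjoint_add)
  moreover have "cinner x ((A + B) *\<^sub>v x) = cinner x (A *\<^sub>v x) + cinner x (B *\<^sub>v x)"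
    if x: "x \<in> carrier_vec n" for x
    using AD(1) BD(1) x by (simp add: add_mult_distrib_mat_vec cinner_add_right[of _ n])
  ultimately show ?thesis
    unfolding psd_mat_def using AD(1,3) BD(1,3) by (simp add: add_nonneg_nonneg)
qed

lemma psd_mat_mat_abs: "T \<in> carrier_mat n n \<Longrightarrow> psd_mat n (mat_abs T)"
  unfolding mat_abs_def by (rule psd_mat_psd_pow[OF psd_mat_adjoint_mult_self])

lemma psd_mat_pow_mat_abs: "T \<in> carrier_mat n n \<Longrightarrow> psd_mat n (psd_pow (mat_abs T) r)"
  by (rule psd_mat_psd_pow[OF psd_mat_mat_abs])

section \<open>Weyl's monotonicity principle\<close>

lemma kernel_nonzero_of_zero_row:
  assumes C: "(C :: complex mat) \<in> carrier_mat n n" and i0: "i0 < n"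
    and row0: "\<And>c. c < n \<Longrightarrow> C $$ (i0, c) = 0"
  shows "\<exists>a \<in> carrier_vec n. a \<noteq> 0\<^sub>v n \<and> C *\<^sub>v a = 0\<^sub>v n"
proof -
  have Ct: "transpose_mat C \<in> carrier_mat n n" using C by simp
  have "transpose_mat C *\<^sub>v unit_vec n i0 = row C i0"
    using mult_unit_vec[OF Ct i0] C i0 by simp
  also have "\<dots> = 0\<^sub>v n" by (rule eq_vecI) (use C row0 i0 in simp_all)
  finally have "det (transpose_mat C) = 0"
    using det_0_iff_vec_prod_zero_field[OF Ct] i0 by (metis unit_vec_carrier unit_vec_nonzero)
  hence "det C = 0" using det_transpose[OF C] by simp
  thus ?thesis using det_0_iff_vec_prod_zero_field[OF C] by blast
qed

text \<open>A vector supported on \<open>I\<close> has \<open>card I\<close> degrees of freedom, and vanishing on \<open>J\<close> after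
  applying \<open>P\<close> imposes only \<open>card J\<close> linear conditions. The conditions are realised as rows of a
  square matrix that has a zero row, hence a nontrivial kernel.\<close>
lemma exists_supported_vec_annihilated:
  assumes P: "(P :: complex mat) \<in> carrier_mat n n"
    and I: "I \<subseteq> {..<n}" and J: "J \<subseteq> {..<n}" and card: "card J < card I"
  shows "\<exists>a \<in> carrier_vec n. a \<noteq> 0\<^sub>v n \<and> (\<forall>r<n. r \<notin> I \<longrightarrow> a $ r = 0) \<and> (\<forall>j\<in>J. (P *\<^sub>v a) $ j = 0)"
proof -
  have fI: "finite I" and fJ: "finite J" using I J finite_subset by blast+
  obtain i0 where i0: "i0 \<in> I" using card by fastforce
  have "card J \<le> card (I - {i0})" using card i0 fI by simp
  then obtain g where g: "g ` J \<subseteq> I - {i0}" "inj_on g J" using card_le_inj[OF fJ] fI by blast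
  define C where "C = mat n n (\<lambda>(r,c). if r \<notin> I then (if c = r then 1 else 0)
      else if r \<in> g ` J then P $$ (the_inv_into J g r, c) else 0)"
  have Cc: "C \<in> carrier_mat n n" unfolding C_def by simp
  have i0n: "i0 < n" using i0 I by auto
  have "C $$ (i0, c) = 0" if "c < n" for c using that i0 i0n g(1) unfolding C_def by auto
  then obtain a where a: "a \<in> carrier_vec n" "a \<noteq> 0\<^sub>v n" and Ca: "C *\<^sub>v a = 0\<^sub>v n"
    using kernel_nonzero_of_zero_row[OF Cc i0n] by blast
  have Ca_index: "(\<Sum>c<n. C $$ (r,c) * a $ c) = 0" if "r < n" for r
    using arg_cong[OF Ca, of "\<lambda>v. v $ r"] Cc a that by (simp add: row_scalar_prod_sum)
  have "a $ r = 0" if r: "r < n" "r \<notin> I" for r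
  proof -
    have "(\<Sum>c<n. C $$ (r,c) * a $ c) = C $$ (r,r) * a $ r"
      by (rule sum_eq_single) (use r in \<open>simp_all add: C_def\<close>)
    thus ?thesis using Ca_index[OF r(1)] r unfolding C_def by simp
  qed
  moreover have "(P *\<^sub>v a) $ j = 0" if j: "j \<in> J" for j
  proof -
    have gj: "g j \<in> I" "g j < n" using g(1) j I by auto
    have "(\<Sum>c<n. C $$ (g j,c) * a $ c) = (\<Sum>c<n. P $$ (j,c) * a $ c)"
      using gj j the_inv_into_f_f[OF g(2) j] unfolding C_def by (intro sum.cong refl) simp
    thus ?thesis using Ca_index[OF gj(2)] P a j J by (auto simp: row_scalar_prod_sum)
  qed
  ultimately show ?thesis using a by blast
qed

lemma cinner_spectral_ge:
  assumes U: "unitary_mat n U" and d: "length d = n" and x: "x \<in> carrier_vec n"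
    and supp: "\<And>i. i < n \<Longrightarrow> d!i < \<mu> \<Longrightarrow> (mat_adjoint U *\<^sub>v x) $ i = 0"
  shows "\<mu> * Re (cinner x x) \<le> Re (cinner x ((U * rdiag d * mat_adjoint U) *\<^sub>v x))"
proof -
  define a where "a = mat_adjoint U *\<^sub>v x"
  have a: "a \<in> carrier_vec n" unfolding a_def using unitary_matD(1)[OF U] by simp
  have "cinner a a = cinner x x"
    unfolding a_def using unitary_mat_cinner[OF unitary_mat_adjoint[OF U], of x x] x by simp
  hence "Re (cinner x x) = (\<Sum>i<n. (cmod (a $ i))\<^sup>2)"
    using Re_cinner_self[of a] a by simp
  moreover have "(\<Sum>i<n. \<mu> * (cmod (a $ i))\<^sup>2) \<le> (\<Sum>i<n. d!i * (cmod (a $ i))\<^sup>2)"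
    using supp unfolding a_def by (intro sum_mono) (force intro: mult_right_mono)
  ultimately show ?thesis
    unfolding cinner_spectral[OF U d x] a_def by (simp add: sum_distrib_left)
qed

lemma cinner_spectral_less:
  assumes U: "unitary_mat n U" and d: "length d = n" and x: "x \<in> carrier_vec n" "x \<noteq> 0\<^sub>v n"
    and supp: "\<And>i. i < n \<Longrightarrow> \<mu> \<le> d!i \<Longrightarrow> (mat_adjoint U *\<^sub>v x) $ i = 0"
  shows "Re (cinner x ((U * rdiag d * mat_adjoint U) *\<^sub>v x)) < \<mu> * Re (cinner x x)"
proof -
  define b where "b = mat_adjoint U *\<^sub>v x"
  have b: "b \<in> carrier_vec n" unfolding b_def using unitary_matD(1)[OF U] by simp
  have bx: "cinner b b = cinner x x"
    unfolding b_def using unitary_mat_cinner[OF unitary_mat_adjoint[OF U], of x x] x by simp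
  hence K: "Re (cinner x x) = (\<Sum>i<n. (cmod (b $ i))\<^sup>2)"
    using Re_cinner_self[of b] b by simp
  have "b \<noteq> 0\<^sub>v n"
  proof
    assume "b = 0\<^sub>v n"
    hence "cinner x x = 0" using bx by (simp add: cinner_def)
    thus False using cinner_self_eq_0[OF x(1)] x(2) by blast
  qed
  then obtain i0 where i0: "i0 < n" "b $ i0 \<noteq> 0" using b by (metis eq_vecI carrier_vecD index_zero_vec)
  have supp_b: "b $ i = 0" if "i < n" "\<mu> \<le> d!i" for i using supp[OF that] unfolding b_def .
  have "d!i0 < \<mu>" using supp_b[OF i0(1)] i0(2) by force
  moreover have "0 \<le> (\<mu> - d!i) * (cmod (b $ i))\<^sup>2" if "i < n" for i
    using supp_b[OF that] by (cases "\<mu> \<le> d!i") simp_all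
  ultimately have "0 < (\<Sum>i<n. (\<mu> - d!i) * (cmod (b $ i))\<^sup>2)"
    using i0 by (intro sum_pos2[of _ i0]) simp_all
  moreover have "(\<Sum>i<n. (\<mu> - d!i) * (cmod (b $ i))\<^sup>2) =
      \<mu> * (\<Sum>i<n. (cmod (b $ i))\<^sup>2) - (\<Sum>i<n. d!i * (cmod (b $ i))\<^sup>2)"
    by (simp only: left_diff_distrib sum_subtractf sum_distrib_left)
  ultimately have "(\<Sum>i<n. d!i * (cmod (b $ i))\<^sup>2) < \<mu> * (\<Sum>i<n. (cmod (b $ i))\<^sup>2)"
    by linarith
  thus ?thesis unfolding cinner_spectral[OF U d x(1)] K b_def[symmetric] by simp
qed

lemma spectral_count_mono:
  assumes U: "unitary_mat n U" and d: "length d = n" and V: "unitary_mat n V" and e: "length e = n"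
    and le: "\<And>x. x \<in> carrier_vec n \<Longrightarrow>
      Re (cinner x ((U * rdiag d * mat_adjoint U) *\<^sub>v x)) \<le> Re (cinner x ((V * rdiag e * mat_adjoint V) *\<^sub>v x))"
  shows "card {i. i < n \<and> \<mu> \<le> d!i} \<le> card {j. j < n \<and> \<mu> \<le> e!j}"
proof (rule ccontr)
  assume "\<not> ?thesis"
  hence card: "card {j. j < n \<and> \<mu> \<le> e!j} < card {i. i < n \<and> \<mu> \<le> d!i}" by simp
  have P: "mat_adjoint V * U \<in> carrier_mat n n" using unitary_matD(1)[OF U] unitary_matD(1)[OF V] by simp
  obtain a where a: "a \<in> carrier_vec n" "a \<noteq> 0\<^sub>v n"
    and supp: "\<forall>r<n. r \<notin> {i. i < n \<and> \<mu> \<le> d!i} \<longrightarrow> a $ r = 0"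
    and ann: "\<forall>j\<in>{j. j < n \<and> \<mu> \<le> e!j}. ((mat_adjoint V * U) *\<^sub>v a) $ j = 0"
    using exists_supported_vec_annihilated[OF P _ _ card] by blast
  define x where "x = U *\<^sub>v a"
  have x: "x \<in> carrier_vec n" unfolding x_def using unitary_matD(1)[OF U] a by simp
  have aU: "mat_adjoint U *\<^sub>v x = a" unfolding x_def by (rule unitary_mat_mult_vec_cancel(1)[OF U a(1)])
  have aV: "mat_adjoint V *\<^sub>v x = (mat_adjoint V * U) *\<^sub>v a"
    unfolding x_def using unitary_matD(1)[OF U] unitary_matD(1)[OF V] a
    by (simp add: assoc_mult_mat_vec[of _ n n _ n])
  have "x \<noteq> 0\<^sub>v n"
  proof
    assume "x = 0\<^sub>v n"
    hence "cinner a a = 0" using unitary_mat_cinner[OF U a(1) a(1)] by (simp add: x_def cinner_def)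
    thus False using cinner_self_eq_0[OF a(1)] a(2) by blast
  qed
  have "\<mu> * Re (cinner x x) \<le> Re (cinner x ((U * rdiag d * mat_adjoint U) *\<^sub>v x))"
    by (rule cinner_spectral_ge[OF U d x]) (use supp aU in auto)
  also have "\<dots> \<le> Re (cinner x ((V * rdiag e * mat_adjoint V) *\<^sub>v x))" by (rule le[OF x])
  also have "\<dots> < \<mu> * Re (cinner x x)"
    by (rule cinner_spectral_less[OF V e x \<open>x \<noteq> 0\<^sub>v n\<close>]) (use ann aV in auto)
  finally show False by simp
qed

lemma rev_sort_nth_le_of_count_le:
  fixes d e :: "real list"
  assumes len: "length d = n" "length e = n"
    and count: "\<And>\<mu>. card {i. i < n \<and> \<mu> \<le> d!i} \<le> card {j. j < n \<and> \<mu> \<le> e!j}"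
    and k: "k < n"
  shows "rev (sort d) ! k \<le> rev (sort e) ! k"
proof (rule ccontr)
  define \<mu> where "\<mu> = rev (sort d) ! k"
  assume "\<not> rev (sort d) ! k \<le> rev (sort e) ! k"
  hence lt: "rev (sort e) ! k < \<mu>" unfolding \<mu>_def by simp
  have desc: "rev (sort l) ! j \<le> rev (sort l) ! i" if "i \<le> j" "j < length l" for l :: "real list" and i j
    using sorted_rev_nth_mono[of "rev (sort l)" i j] that by simp
  have count_sort: "card {i. i < n \<and> \<mu> \<le> l!i} = card {i. i < n \<and> \<mu> \<le> rev (sort l) ! i}"
    if "length l = n" for l :: "real list"
  proof -
    have "card {i. i < n \<and> \<mu> \<le> l!i} = length (filter ((\<le>) \<mu>) l)"
      using that by (simp add: length_filter_conv_card)
    also have "\<dots> = length (filter ((\<le>) \<mu>) (rev (sort l)))"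
      by (metis mset_filter mset_rev mset_sort size_mset)
    also have "\<dots> = card {i. i < n \<and> \<mu> \<le> rev (sort l) ! i}"
      using that by (simp add: length_filter_conv_card)
    finally show ?thesis .
  qed
  have "{..k} \<subseteq> {i. i < n \<and> \<mu> \<le> rev (sort d) ! i}"
    using k len desc[of _ k d] unfolding \<mu>_def by auto
  hence "Suc k \<le> card {i. i < n \<and> \<mu> \<le> rev (sort d) ! i}"
    using card_mono[of "{i. i < n \<and> \<mu> \<le> rev (sort d) ! i}" "{..k}"] by simp
  moreover have "{j. j < n \<and> \<mu> \<le> rev (sort e) ! j} \<subseteq> {..<k}"
  proof (rule subsetI, rule ccontr)
    fix j assume j: "j \<in> {j. j < n \<and> \<mu> \<le> rev (sort e) ! j}" "j \<notin> {..<k}"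
    hence "rev (sort e) ! j \<le> rev (sort e) ! k" using desc[of k j e] len by simp
    thus False using j lt by simp
  qed
  hence "card {j. j < n \<and> \<mu> \<le> rev (sort e) ! j} \<le> k"
    using card_mono[of "{..<k}"] by fastforce
  ultimately show False using count[of \<mu>] count_sort[OF len(1)] count_sort[OF len(2)] by simp
qed

theorem spectral_weyl_mono:
  assumes U: "unitary_mat n U" and d: "length d = n" and V: "unitary_mat n V" and e: "length e = n"
    and le: "\<And>x. x \<in> carrier_vec n \<Longrightarrow>
      Re (cinner x ((U * rdiag d * mat_adjoint U) *\<^sub>v x)) \<le> Re (cinner x ((V * rdiag e * mat_adjoint V) *\<^sub>v x))"
    and k: "k < n"
  shows "rev (sort d) ! k \<le> rev (sort e) ! k"
  by (rule rev_sort_nth_le_of_count_le[OF d e spectral_count_mono[OF U d V e le] k])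

lemma spectral_eigenvalues_unique:
  assumes U: "unitary_mat n U" and d: "length d = n" and V: "unitary_mat n V" and e: "length e = n"
    and eq: "U * rdiag d * mat_adjoint U = V * rdiag e * mat_adjoint V"
  shows "mset d = mset e"
proof -
  have "rev (sort d) = rev (sort e)"
  proof (rule nth_equalityI)
    fix k assume "k < length (rev (sort d))"
    hence k: "k < n" using d by simp
    show "rev (sort d) ! k = rev (sort e) ! k"
      using spectral_weyl_mono[OF U d V e _ k] spectral_weyl_mono[OF V e U d _ k] eq by force
  qed (use d e in simp)
  thus ?thesis by (metis mset_rev mset_sort)
qed

section \<open>Singular values and the operator norm\<close>

lemma mat_abs_eq:
  assumes X: "X \<in> carrier_mat n n" and ud: "psd_decomp (mat_adjoint X * X) = (U, d)"
  shows "mat_abs X = U * rdiag (map sqrt d) * mat_adjoint U"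
proof -
  note D = psd_decompD[OF psd_mat_adjoint_mult_self[OF X] ud]
  have "map (\<lambda>x. rpow x (1/2)) d = map sqrt d"
    using D(2,3) by (intro map_cong refl) (auto simp: rpow_half in_set_conv_nth)
  thus ?thesis unfolding mat_abs_def psd_pow_eq[OF ud] by (simp only:)
qed

lemma psd_eigenvalues_unique:
  assumes A: "psd_mat n A" and U: "unitary_mat n U" and d: "length d = n"
    and A_eq: "A = U * rdiag d * mat_adjoint U"
  shows "mset (psd_eigenvalues A) = mset d"
proof -
  obtain V e where ve: "psd_decomp A = (V, e)" by fastforce
  note D = psd_decompD[OF A ve]
  have "mset e = mset d" by (rule spectral_eigenvalues_unique[OF D(1,2) U d]) (use D(4) A_eq in simp)
  thus ?thesis unfolding psd_eigenvalues_def ve by simp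
qed

lemma psd_eigenvalues:
  assumes A: "psd_mat n A"
  shows "length (psd_eigenvalues A) = n" "\<forall>x \<in> set (psd_eigenvalues A). x \<ge> 0"
  using psd_decompD(2,3)[OF A, of "fst (psd_decomp A)"] unfolding psd_eigenvalues_def
  by (auto simp: in_set_conv_nth)

lemma mset_singular_values:
  assumes X: "X \<in> carrier_mat n n"
  shows "mset (singular_values X) = mset (map sqrt (psd_eigenvalues (mat_adjoint X * X)))"
proof -
  obtain U d where ud: "psd_decomp (mat_adjoint X * X) = (U, d)" by fastforce
  note D = psd_decompD[OF psd_mat_adjoint_mult_self[OF X] ud]
  have "mset (psd_eigenvalues (mat_abs X)) = mset (map sqrt d)"
    by (rule psd_eigenvalues_unique[OF psd_mat_mat_abs[OF X] D(1)]) (use D(2) mat_abs_eq[OF X ud] in simp_all)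
  thus ?thesis unfolding singular_values_def psd_eigenvalues_def ud by simp
qed

lemma length_singular_values:
  assumes X: "X \<in> carrier_mat n n"
  shows "length (singular_values X) = n"
proof -
  have "length (singular_values X) = length (psd_eigenvalues (mat_adjoint X * X))"
    using arg_cong[OF mset_singular_values[OF X], of size] by simp
  thus ?thesis using psd_eigenvalues(1)[OF psd_mat_adjoint_mult_self[OF X]] by simp
qed

lemma mset_singular_values_psd:
  assumes A: "psd_mat n A"
  shows "mset (singular_values A) = mset (psd_eigenvalues A)"
proof -
  obtain V e where ve: "psd_decomp A = (V, e)" by fastforce
  note D = psd_decompD[OF A ve] and VD = unitary_matD[OF D(1)]
  have Ac: "A \<in> carrier_mat n n" and hA: "hermitian_mat A" using psd_matD[OF A] by auto
  have R: "rdiag e \<in> carrier_mat n n" using D(2) rdiag_carrier[of e] by simp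
  have sq: "rdiag e * (mat_adjoint V * V) * rdiag e = rdiag (map (\<lambda>x. x * x) e)"
    using rdiag_mult_rdiag[of "\<lambda>x. x" e "\<lambda>x. x"] by (simp add: VD(3) right_mult_one_mat[OF R])
  have "A * A = V * (rdiag e * (mat_adjoint V * V) * rdiag e) * mat_adjoint V"
    unfolding D(4) using VD(1) R by (simp add: assoc_mult_mat[of _ n n _ n _ n])
  hence "mat_adjoint A * A = V * rdiag (map (\<lambda>x. x * x) e) * mat_adjoint V"
    using hA unfolding hermitian_mat_def sq by simp
  hence "mset (psd_eigenvalues (mat_adjoint A * A)) = mset (map (\<lambda>x. x * x) e)"
    using D(1,2) by (intro psd_eigenvalues_unique[OF psd_mat_adjoint_mult_self[OF Ac]]) simp_all
  hence "mset (singular_values A) = mset (map (sqrt \<circ> (\<lambda>x. x * x)) e)"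
    unfolding mset_singular_values[OF Ac] by (metis mset_map map_map)
  also have "map (sqrt \<circ> (\<lambda>x. x * x)) e = e"
    using D(2,3) by (intro map_idI) (auto simp: in_set_conv_nth)
  finally show ?thesis unfolding psd_eigenvalues_def ve by simp
qed

lemma hd_rev_sort_eq_Max:
  fixes xs :: "'a :: linorder list"
  assumes "xs \<noteq> []"
  shows "hd (rev (sort xs)) = Max (set xs)"
proof (rule Max_eqI[symmetric])
  have ne: "sort xs \<noteq> []" using assms by (metis length_0_conv length_sort)
  show "hd (rev (sort xs)) \<in> set xs" using ne by (metis hd_in_set rev_is_Nil_conv set_rev set_sort)
  fix y assume "y \<in> set xs"
  then obtain k where k: "k < length xs" "sort xs ! k = y" by (metis in_set_conv_nth length_sort set_sort)
  have "hd (rev (sort xs)) = sort xs ! (length xs - 1)"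
    using ne by (simp add: hd_rev last_conv_nth)
  moreover have "sort xs ! k \<le> sort xs ! (length xs - 1)"
    using k(1) by (intro sorted_nth_mono) simp_all
  ultimately show "y \<le> hd (rev (sort xs))" using k(2) by simp
qed simp

lemma op_norm_psd:
  assumes A: "psd_mat n A" and n: "n > 0"
  shows "op_norm A = Max (set (psd_eigenvalues A))"
proof -
  have "set (psd_eigenvalues (mat_abs A)) = set (psd_eigenvalues A)"
    using arg_cong[OF mset_singular_values_psd[OF A], of set_mset] by (simp add: singular_values_def)
  moreover have "psd_eigenvalues (mat_abs A) \<noteq> []"
    using length_singular_values[OF psd_matD(1)[OF A]] n by (auto simp: singular_values_def)
  ultimately show ?thesis
    unfolding op_norm_def singular_values_def by (simp add: hd_rev_sort_eq_Max)
qed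

lemma op_norm_nonneg:
  assumes "psd_mat n A" "n > 0"
  shows "op_norm A \<ge> 0"
proof -
  have "psd_eigenvalues A \<noteq> []" using psd_eigenvalues(1)[OF assms(1)] assms(2) by auto
  thus ?thesis unfolding op_norm_psd[OF assms] using psd_eigenvalues(2)[OF assms(1)] by simp
qed

lemma cinner_le_op_norm:
  assumes A: "psd_mat n A" and n: "n > 0" and w: "w \<in> carrier_vec n"
  shows "Re (cinner w (A *\<^sub>v w)) \<le> op_norm A * Re (cinner w w)"
proof -
  obtain V e where ve: "psd_decomp A = (V, e)" by fastforce
  note D = psd_decompD[OF A ve]
  define z where "z = mat_adjoint V *\<^sub>v w"
  have z: "z \<in> carrier_vec n" unfolding z_def using unitary_matD(1)[OF D(1)] by simp
  have "e!i \<le> op_norm A" if "i < n" for i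
    unfolding op_norm_psd[OF A n] psd_eigenvalues_def ve using that D(2) by simp
  hence "Re (cinner w (A *\<^sub>v w)) \<le> (\<Sum>i<n. op_norm A * (cmod (z $ i))\<^sup>2)"
    unfolding z_def D(4) cinner_spectral[OF D(1,2) w] by (auto intro!: sum_mono mult_right_mono)
  also have "\<dots> = op_norm A * Re (cinner z z)" using z by (simp add: Re_cinner_self sum_distrib_left)
  also have "cinner z z = cinner w w"
    unfolding z_def using unitary_mat_cinner[OF unitary_mat_adjoint[OF D(1)] w w] by simp
  finally show ?thesis .
qed

section \<open>The mixed Schwarz inequality\<close>

lemma psd_mat_le_of_cinner_eq:
  assumes M: "psd_mat n M" and v: "v \<in> carrier_vec n" and w: "w \<in> carrier_vec n"
    and vw: "cinner v (M *\<^sub>v w) = complex_of_real s" and vv: "cinner v (M *\<^sub>v v) = complex_of_real s"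
  shows "s \<le> Re (cinner w (M *\<^sub>v w))"
proof -
  note MD = psd_matD[OF M]
  have Mv: "M *\<^sub>v v \<in> carrier_vec n" using MD(1) v by simp
  have "cinner w (M *\<^sub>v v) = cnj (cinner (M *\<^sub>v v) w)" using cinner_cnj[of "M *\<^sub>v v" w] MD(1) w by simp
  also have "cinner (M *\<^sub>v v) w = complex_of_real s"
    using hermitian_mat_cinner[OF MD(2,1) v w] vw by simp
  finally have wv: "cinner w (M *\<^sub>v v) = complex_of_real s" by simp
  have "cinner (w - v) (M *\<^sub>v (w - v)) = cinner w (M *\<^sub>v w) - complex_of_real s"
    using MD(1) v w
    by (simp add: mult_minus_distrib_mat_vec cinner_diff_left[of _ n] cinner_diff_right[of _ n] vw vv wv)
  thus ?thesis using MD(3)[of "w - v"] v w by simp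
qed

lemma gram_col_eq_zero:
  assumes G: "G \<in> carrier_mat n n" and dd: "length dd = n" and GG: "mat_adjoint G * G = rdiag dd"
    and i: "i < n" "dd!i = 0"
  shows "col G i = 0\<^sub>v n"
proof -
  have "cinner (col G i) (col G i) = 0"
    using mat_adjoint_mult_index[OF G G i(1) i(1)] GG i dd by simp
  thus ?thesis using cinner_self_eq_0 G by simp
qed

lemma gram_nonneg:
  assumes G: "G \<in> carrier_mat n n" and dd: "length dd = n" and GG: "mat_adjoint G * G = rdiag dd"
    and i: "i < n"
  shows "dd!i \<ge> 0"
proof -
  have "complex_of_real (dd!i) = cinner (col G i) (col G i)"
    using mat_adjoint_mult_index[OF G G i i] GG i dd by simp
  thus ?thesis using cinner_self_nonneg[of "col G i"] by (metis Re_complex_of_real)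
qed

lemma gram_mult_eigenbasis:
  assumes T: "T \<in> carrier_mat n n" and Y: "unitary_mat n Y" and dd: "length dd = n"
    and TT: "mat_adjoint T * T = Y * rdiag dd * mat_adjoint Y"
  shows "mat_adjoint (T * Y) * (T * Y) = rdiag dd"
proof -
  note YD = unitary_matD[OF Y]
  have R: "rdiag dd \<in> carrier_mat n n" using dd rdiag_carrier[of dd] by simp
  have "mat_adjoint (T * Y) * (T * Y) = mat_adjoint Y * (mat_adjoint T * T) * Y"
    using T YD(1) by (simp add: mat_adjoint_mult[OF T YD(1)] assoc_mult_mat[of _ n n _ n _ n])
  also have "\<dots> = (mat_adjoint Y * Y) * rdiag dd * (mat_adjoint Y * Y)"
    unfolding TT using YD(1) R by (simp add: assoc_mult_mat[of _ n n _ n _ n])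
  finally show ?thesis by (simp add: YD(3) left_mult_one_mat[OF R] right_mult_one_mat[OF R])
qed

lemma gram_projection:
  assumes G: "G \<in> carrier_mat n n" and dd: "length dd = n" and GG: "mat_adjoint G * G = rdiag dd"
    and w: "w \<in> carrier_vec n"
  shows "mat_adjoint G *\<^sub>v (G *\<^sub>v vec n (\<lambda>i. (mat_adjoint G *\<^sub>v w) $ i / complex_of_real (dd!i))) =
    mat_adjoint G *\<^sub>v w" (is "_ *\<^sub>v (_ *\<^sub>v ?ga) = ?be")
proof -
  have "mat_adjoint G *\<^sub>v (G *\<^sub>v ?ga) = rdiag dd *\<^sub>v ?ga"
    unfolding GG[symmetric] using assoc_mult_mat_vec[OF mat_adjoint_carrier[OF G] G, of ?ga] by simp
  also have "\<dots> = ?be"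
  proof (rule eq_vecI)
    fix i assume "i < dim_vec ?be"
    hence i: "i < n" using G by simp
    have "?be $ i = 0" if "dd!i = 0"
      using mat_adjoint_mult_vec_index[OF G w i] gram_col_eq_zero[OF G dd GG i that] by (simp add: cinner_def)
    thus "(rdiag dd *\<^sub>v ?ga) $ i = ?be $ i"
      using rdiag_mult_vec_index[of ?ga dd i] dd i by (cases "dd!i = 0") simp_all
  qed (use G dd in simp)
  finally show ?thesis .
qed

text \<open>A weighted Bessel inequality: the columns of \<open>G\<close> are orthogonal, possibly zero, eigenvectors
  of \<open>M\<close>, and a term with \<open>dd!i = 0\<close> vanishes as \<open>x / 0 = 0\<close>. The proof compares \<open>w\<close> with its
  orthogonal projection \<open>v\<close> onto the range of \<open>G\<close>.\<close>
lemma psd_mat_weighted_bessel: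
  assumes G: "G \<in> carrier_mat n n" and dd: "length dd = n" and GG: "mat_adjoint G * G = rdiag dd"
    and M: "psd_mat n M" and b: "length b = n" and MG: "M * G = G * rdiag b"
    and w: "w \<in> carrier_vec n"
  shows "(\<Sum>i<n. b!i * (cmod (cinner (col G i) w))\<^sup>2 / dd!i) \<le> Re (cinner w (M *\<^sub>v w))"
proof -
  have Rb: "rdiag b \<in> carrier_mat n n" using b rdiag_carrier[of b] by simp
  define be where "be = mat_adjoint G *\<^sub>v w"
  have be_i: "be $ i = cinner (col G i) w" if "i < n" for i
    unfolding be_def by (rule mat_adjoint_mult_vec_index[OF G w that])
  have be0: "be $ i = 0" if "i < n" "dd!i = 0" for i
    using be_i[OF that(1)] gram_col_eq_zero[OF G dd GG that] by (simp add: cinner_def)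
  define ga where "ga = vec n (\<lambda>i. be $ i / complex_of_real (dd!i))"
  have ga: "ga \<in> carrier_vec n" unfolding ga_def by simp
  have ga_i: "ga $ i = be $ i / complex_of_real (dd!i)" if "i < n" for i unfolding ga_def using that by simp
  define v where "v = G *\<^sub>v ga"
  have v: "v \<in> carrier_vec n" unfolding v_def using G ga by simp
  have Gv: "mat_adjoint G *\<^sub>v v = be"
    unfolding v_def ga_def be_def by (rule gram_projection[OF G dd GG w])
  have vM: "cinner v (M *\<^sub>v u) = cinner (rdiag b *\<^sub>v ga) (mat_adjoint G *\<^sub>v u)" if u: "u \<in> carrier_vec n" for u
  proof -
    have "M *\<^sub>v v = G *\<^sub>v (rdiag b *\<^sub>v ga)"
      unfolding v_def using psd_matD(1)[OF M] G Rb ga MG by (metis assoc_mult_mat_vec)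
    moreover have "cinner v (M *\<^sub>v u) = cinner (M *\<^sub>v v) u"
      by (rule hermitian_mat_cinner[OF psd_matD(2,1)[OF M] v u])
    ultimately show ?thesis
      using cinner_adjoint[OF mat_adjoint_carrier[OF G] mult_mat_vec_carrier[OF Rb ga] u] by simp
  qed
  define S where "S = (\<Sum>i<n. b!i * (cmod (be $ i))\<^sup>2 / dd!i)"
  have "cnj (complex_of_real (b!i) * ga $ i) * be $ i = complex_of_real (b!i * (cmod (be $ i))\<^sup>2 / dd!i)"
    if i: "i < n" for i
  proof (cases "dd!i = 0")
    case True thus ?thesis using be0[OF i] by simp
  next
    case False
    have "cnj (ga $ i) * be $ i = (cnj (be $ i) * be $ i) / complex_of_real (dd!i)" using ga_i[OF i] by simp
    thus ?thesis by (simp add: cnj_mult_self mult.assoc)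
  qed
  hence "cinner (rdiag b *\<^sub>v ga) be = complex_of_real S"
    unfolding cinner_def S_def of_real_sum using ga b by (simp del: index_mult_mat_vec)
  note S = this
  have "S \<le> Re (cinner w (M *\<^sub>v w))"
    by (rule psd_mat_le_of_cinner_eq[OF M v w]) (simp_all only: vM[OF w] vM[OF v] Gv be_def[symmetric] S)
  thus ?thesis unfolding S_def using be_i by simp
qed

lemma mult_eq_sqrt_weights:
  fixes a b d x y :: real
  assumes "d \<ge> 0" "d = 0 \<Longrightarrow> y = 0" "d > 0 \<Longrightarrow> a * b = d"
  shows "y * x = (sqrt a * x) * (sqrt (b / d) * y)"
proof (cases "d = 0")
  case False
  hence "sqrt a * sqrt (b / d) = 1" using assms by (simp add: real_sqrt_mult[symmetric])
  thus ?thesis by (simp add: algebra_simps)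
qed (use assms in simp)

lemma sum_mult_square_le:
  fixes p q :: "'a \<Rightarrow> real"
  assumes "finite A"
  shows "(\<Sum>i\<in>A. p i * q i)\<^sup>2 \<le> (\<Sum>i\<in>A. (p i)\<^sup>2) * (\<Sum>i\<in>A. (q i)\<^sup>2)"
proof -
  have e1: "(\<Sum>i\<in>A. \<Sum>j\<in>A. (p i)\<^sup>2 * (q j)\<^sup>2) = (\<Sum>i\<in>A. (p i)\<^sup>2) * (\<Sum>i\<in>A. (q i)\<^sup>2)"
    by (simp add: sum_product)
  have e2: "(\<Sum>i\<in>A. \<Sum>j\<in>A. (p j)\<^sup>2 * (q i)\<^sup>2) = (\<Sum>i\<in>A. (p i)\<^sup>2) * (\<Sum>i\<in>A. (q i)\<^sup>2)"
    by (subst sum.swap) (simp add: sum_product)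
  have e3: "(\<Sum>i\<in>A. \<Sum>j\<in>A. (p i * q i) * (p j * q j)) = (\<Sum>i\<in>A. p i * q i)\<^sup>2"
    by (simp add: power2_eq_square sum_product)
  have "0 \<le> (\<Sum>i\<in>A. \<Sum>j\<in>A. (p i * q j - p j * q i)\<^sup>2)" by (intro sum_nonneg) simp
  also have "\<dots> = (\<Sum>i\<in>A. \<Sum>j\<in>A. (p i)\<^sup>2 * (q j)\<^sup>2 + (p j)\<^sup>2 * (q i)\<^sup>2 - 2 * ((p i * q i) * (p j * q j)))"
    by (intro sum.cong refl) (simp add: power2_eq_square algebra_simps)
  also have "\<dots> = (\<Sum>i\<in>A. \<Sum>j\<in>A. (p i)\<^sup>2 * (q j)\<^sup>2) + (\<Sum>i\<in>A. \<Sum>j\<in>A. (p j)\<^sup>2 * (q i)\<^sup>2)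
      - 2 * (\<Sum>i\<in>A. \<Sum>j\<in>A. (p i * q i) * (p j * q j))"
    by (simp add: sum.distrib sum_subtractf sum_distrib_left)
  finally show ?thesis unfolding e1 e2 e3 by simp
qed

text \<open>The mixed Schwarz inequality, in the coordinates of an eigenbasis \<open>Y\<close> of \<open>T\<^sup>* T\<close>:
  the vectors \<open>T y\<^sub>i\<close> are orthogonal with \<open>\<parallel>T y\<^sub>i\<parallel>\<^sup>2 = dd!i\<close>, and Cauchy--Schwarz is applied
  with the weights \<open>a!i\<close> and \<open>b!i / dd!i\<close>, whose product is \<open>1\<close>.\<close>
lemma mixed_schwarz_spectral:
  assumes T: "T \<in> carrier_mat n n" and Y: "unitary_mat n Y" and dd: "length dd = n"
    and TT: "mat_adjoint T * T = Y * rdiag dd * mat_adjoint Y"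
    and a: "length a = n" "\<forall>i<n. a!i \<ge> 0" and N: "N = Y * rdiag a * mat_adjoint Y"
    and M: "psd_mat n M" and b: "length b = n" "\<forall>i<n. b!i \<ge> 0"
    and MT: "\<And>i. i < n \<Longrightarrow> M *\<^sub>v (T *\<^sub>v col Y i) = complex_of_real (b!i) \<cdot>\<^sub>v (T *\<^sub>v col Y i)"
    and ab: "\<And>i. i < n \<Longrightarrow> dd!i > 0 \<Longrightarrow> a!i * b!i = dd!i"
    and x: "x \<in> carrier_vec n" and w: "w \<in> carrier_vec n"
  shows "(cmod (cinner w (T *\<^sub>v x)))\<^sup>2 \<le> Re (cinner x (N *\<^sub>v x)) * Re (cinner w (M *\<^sub>v w))"
proof -
  note YD = unitary_matD[OF Y]
  define G where "G = T * Y"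
  have Gc: "G \<in> carrier_mat n n" unfolding G_def using T YD(1) by simp
  have colG: "col G i = T *\<^sub>v col Y i" if "i < n" for i unfolding G_def by (rule col_mult2[OF T YD(1) that])
  have GG: "mat_adjoint G * G = rdiag dd" unfolding G_def by (rule gram_mult_eigenbasis[OF T Y dd TT])
  have MG: "M * G = G * rdiag b"
    by (rule mult_eq_mult_rdiag_if_eigenvectors[OF psd_matD(1)[OF M] Gc b(1)]) (simp add: colG MT)
  define al where "al = mat_adjoint Y *\<^sub>v x"
  have al: "al \<in> carrier_vec n" unfolding al_def using YD(1) by simp
  define be where "be = mat_adjoint G *\<^sub>v w"
  have be: "be \<in> carrier_vec n" unfolding be_def using Gc by simp
  have be_i: "be $ i = cinner (col G i) w" if "i < n" for i
    unfolding be_def by (rule mat_adjoint_mult_vec_index[OF Gc w that])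
  have be0: "be $ i = 0" if "i < n" "dd!i = 0" for i
    using be_i[OF that(1)] gram_col_eq_zero[OF Gc dd GG that] by (simp add: cinner_def)
  have "T *\<^sub>v x = G *\<^sub>v al"
    unfolding G_def al_def using T YD(1) x unitary_mat_mult_vec_cancel(2)[OF Y x] by simp
  hence "cinner w (T *\<^sub>v x) = cinner be al" using cinner_adjoint[OF Gc w al] unfolding be_def by simp
  hence lhs: "cinner w (T *\<^sub>v x) = (\<Sum>i<n. cnj (be $ i) * al $ i)" unfolding cinner_def using be by simp
  have psd_N: "psd_mat n N" unfolding N by (rule spectral_psd_mat[OF Y a])
  define p where "p i = sqrt (a!i) * cmod (al $ i)" for i
  define q where "q i = sqrt (b!i / dd!i) * cmod (be $ i)" for i
  have "cmod (cinner w (T *\<^sub>v x)) \<le> (\<Sum>i<n. cmod (be $ i) * cmod (al $ i))"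
    unfolding lhs by (metis (no_types, lifting) norm_sum norm_mult complex_mod_cnj sum.cong)
  also have "\<dots> = (\<Sum>i<n. p i * q i)"
    unfolding p_def q_def using gram_nonneg[OF Gc dd GG] ab be0
    by (intro sum.cong refl mult_eq_sqrt_weights) auto
  finally have "(cmod (cinner w (T *\<^sub>v x)))\<^sup>2 \<le> (\<Sum>i<n. p i * q i)\<^sup>2" by (simp add: power_mono)
  also have "\<dots> \<le> (\<Sum>i<n. (p i)\<^sup>2) * (\<Sum>i<n. (q i)\<^sup>2)" by (rule sum_mult_square_le) simp
  also have "(\<Sum>i<n. (p i)\<^sup>2) = Re (cinner x (N *\<^sub>v x))"
    unfolding p_def N cinner_spectral[OF Y a(1) x] al_def using a(2) by (simp add: power_mult_distrib)
  also have "(\<Sum>i<n. (q i)\<^sup>2) = (\<Sum>i<n. b!i * (cmod (cinner (col G i) w))\<^sup>2 / dd!i)"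
    unfolding q_def using b(2) gram_nonneg[OF Gc dd GG] be_i
    by (intro sum.cong refl) (simp add: power_mult_distrib)
  also have "Re (cinner x (N *\<^sub>v x)) * \<dots> \<le> Re (cinner x (N *\<^sub>v x)) * Re (cinner w (M *\<^sub>v w))"
    using psd_mat_weighted_bessel[OF Gc dd GG M b(1) MG w] psd_matD(3)[OF psd_N x] by (rule mult_left_mono)
  finally show ?thesis .
qed

lemma psd_pow_mat_abs_eigenvector:
  assumes T: "T \<in> carrier_mat n n" and y: "y \<in> carrier_vec n" and d: "d \<ge> 0"
    and TTy: "(mat_adjoint T * T) *\<^sub>v y = complex_of_real d \<cdot>\<^sub>v y"
  shows "psd_pow (mat_abs T) r *\<^sub>v y = complex_of_real (rpow (sqrt d) r) \<cdot>\<^sub>v y"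
proof -
  have "mat_abs T *\<^sub>v y = complex_of_real (sqrt d) \<cdot>\<^sub>v y"
    using psd_pow_eigenvector[OF psd_mat_adjoint_mult_self[OF T] y TTy, of "1/2"] d
    by (simp add: mat_abs_def rpow_half)
  thus ?thesis by (rule psd_pow_eigenvector[OF psd_mat_mat_abs[OF T] y])
qed

lemma psd_pow_mat_abs_adjoint_eigenvector:
  assumes T: "T \<in> carrier_mat n n" and y: "y \<in> carrier_vec n" and d: "d \<ge> 0"
    and TTy: "(mat_adjoint T * T) *\<^sub>v y = complex_of_real d \<cdot>\<^sub>v y"
  shows "psd_pow (mat_abs (mat_adjoint T)) r *\<^sub>v (T *\<^sub>v y) = complex_of_real (rpow (sqrt d) r) \<cdot>\<^sub>v (T *\<^sub>v y)"
proof -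
  have aT: "mat_adjoint T \<in> carrier_mat n n" using T by simp
  have "(mat_adjoint (mat_adjoint T) * mat_adjoint T) *\<^sub>v (T *\<^sub>v y) = T *\<^sub>v ((mat_adjoint T * T) *\<^sub>v y)"
    using T y by (simp add: assoc_mult_mat_vec[of _ n n _ n])
  also have "\<dots> = complex_of_real d \<cdot>\<^sub>v (T *\<^sub>v y)" unfolding TTy by (rule mult_mat_vec[OF T y])
  finally show ?thesis by (rule psd_pow_mat_abs_eigenvector[OF aT mult_mat_vec_carrier[OF T y] d])
qed

lemma rpow_sqrt_mult:
  assumes "d > 0"
  shows "rpow (sqrt d) (2 * (1 - t)) * rpow (sqrt d) (2 * t) = d"
proof -
  have "rpow (sqrt d) (2 * (1 - t)) * rpow (sqrt d) (2 * t) = sqrt d powr (2 * (1 - t) + 2 * t)"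
    using assms by (simp only: rpow_pos real_sqrt_gt_zero powr_add)
  also have "\<dots> = d" using assms by (simp add: powr_numeral)
  finally show ?thesis .
qed

theorem mixed_schwarz:
  assumes T: "T \<in> carrier_mat n n" and x: "x \<in> carrier_vec n" and w: "w \<in> carrier_vec n"
  shows "(cmod (cinner w (T *\<^sub>v x)))\<^sup>2 \<le>
    Re (cinner x (psd_pow (mat_abs T) (2 * (1 - t)) *\<^sub>v x)) *
    Re (cinner w (psd_pow (mat_abs (mat_adjoint T)) (2 * t) *\<^sub>v w))"
proof -
  obtain Y dd where ud: "psd_decomp (mat_adjoint T * T) = (Y, dd)" by fastforce
  note D = psd_decompD[OF psd_mat_adjoint_mult_self[OF T] ud]
  define a where "a = map (\<lambda>d. rpow (sqrt d) (2 * (1 - t))) dd"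
  define b where "b = map (\<lambda>d. rpow (sqrt d) (2 * t)) dd"
  have la: "length a = n" and lb: "length b = n" unfolding a_def b_def using D(2) by simp_all
  have eig: "(mat_adjoint T * T) *\<^sub>v col Y i = complex_of_real (dd!i) \<cdot>\<^sub>v col Y i" if "i < n" for i
    unfolding D(4) by (rule spectral_col_eigenvector[OF D(1,2) that])
  have Y: "Y \<in> carrier_mat n n" using unitary_matD(1)[OF D(1)] .
  have "psd_pow (mat_abs T) (2 * (1 - t)) = Y * rdiag a * mat_adjoint Y"
    using psd_pow_mat_abs_eigenvector[OF T _ _ eig] D(2,3) Y
    by (intro spectral_if_eigenvectors[OF D(1) psd_matD(1)[OF psd_mat_pow_mat_abs[OF T]] la])
      (simp add: a_def)
  moreover have "psd_pow (mat_abs (mat_adjoint T)) (2 * t) *\<^sub>v (T *\<^sub>v col Y i) =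
      complex_of_real (b!i) \<cdot>\<^sub>v (T *\<^sub>v col Y i)" if "i < n" for i
    using psd_pow_mat_abs_adjoint_eigenvector[OF T _ _ eig[OF that]] D(2,3) Y that by (simp add: b_def)
  moreover have "a!i * b!i = dd!i" if "i < n" "dd!i > 0" for i
    using rpow_sqrt_mult[OF that(2)] that(1) D(2) by (simp add: a_def b_def)
  moreover have "\<forall>i<n. a!i \<ge> 0" "\<forall>i<n. b!i \<ge> 0"
    using D(2,3) by (auto simp: a_def b_def intro!: rpow_nonneg)
  ultimately show ?thesis
    using mixed_schwarz_spectral[OF T D(1,2,4) la _ _ psd_mat_pow_mat_abs[OF mat_adjoint_carrier[OF T]] lb
        _ _ _ x w]
    by blast
qed

lemma sqrt_mult_add_square_le:
  assumes "a \<ge> 0" "b \<ge> 0" "c \<ge> 0" "(d::real) \<ge> 0"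
  shows "(sqrt a * sqrt b + sqrt c * sqrt d)\<^sup>2 \<le> (a + c) * (b + d)"
  using sum_mult_square_le[of "{True, False}" "\<lambda>i. if i then sqrt a else sqrt c"
      "\<lambda>i. if i then sqrt b else sqrt d"]
    assms by simp

lemma mixed_schwarz_add:
  fixes t r :: real
  assumes T: "T \<in> carrier_mat n n" and S: "S \<in> carrier_mat n n"
    and x: "x \<in> carrier_vec n" and w: "w \<in> carrier_vec n"
  defines "M \<equiv> psd_pow (mat_abs (mat_adjoint T)) (2 * t) + psd_pow (mat_abs (mat_adjoint S)) (2 * r)"
    and "N \<equiv> psd_pow (mat_abs T) (2 * (1 - t)) + psd_pow (mat_abs S) (2 * (1 - r))"
  shows "(cmod (cinner w ((T + S) *\<^sub>v x)))\<^sup>2 \<le> Re (cinner x (N *\<^sub>v x)) * Re (cinner w (M *\<^sub>v w))"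
proof -
  let ?nT = "Re (cinner x (psd_pow (mat_abs T) (2 * (1 - t)) *\<^sub>v x))"
  let ?nS = "Re (cinner x (psd_pow (mat_abs S) (2 * (1 - r)) *\<^sub>v x))"
  let ?mT = "Re (cinner w (psd_pow (mat_abs (mat_adjoint T)) (2 * t) *\<^sub>v w))"
  let ?mS = "Re (cinner w (psd_pow (mat_abs (mat_adjoint S)) (2 * r) *\<^sub>v w))"
  have aT: "mat_adjoint T \<in> carrier_mat n n" and aS: "mat_adjoint S \<in> carrier_mat n n" using T S by simp_all
  note nonneg = psd_matD(3)[OF psd_mat_pow_mat_abs[OF T] x] psd_matD(3)[OF psd_mat_pow_mat_abs[OF S] x]
    psd_matD(3)[OF psd_mat_pow_mat_abs[OF aT] w] psd_matD(3)[OF psd_mat_pow_mat_abs[OF aS] w]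
  have "cinner w ((T + S) *\<^sub>v x) = cinner w (T *\<^sub>v x) + cinner w (S *\<^sub>v x)"
    using T S x w by (simp add: add_mult_distrib_mat_vec cinner_add_right[of _ n])
  hence "cmod (cinner w ((T + S) *\<^sub>v x)) \<le> cmod (cinner w (T *\<^sub>v x)) + cmod (cinner w (S *\<^sub>v x))"
    by (simp add: norm_triangle_ineq)
  also have "\<dots> \<le> sqrt ?nT * sqrt ?mT + sqrt ?nS * sqrt ?mS"
    using real_sqrt_le_mono[OF mixed_schwarz[OF T x w, of t]]
      real_sqrt_le_mono[OF mixed_schwarz[OF S x w, of r]]
    by (simp add: real_sqrt_mult add_mono)
  finally have "(cmod (cinner w ((T + S) *\<^sub>v x)))\<^sup>2 \<le> (sqrt ?nT * sqrt ?mT + sqrt ?nS * sqrt ?mS)\<^sup>2"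
    by (simp add: power_mono)
  also have "\<dots> \<le> (?nT + ?nS) * (?mT + ?mS)" using nonneg by (intro sqrt_mult_add_square_le)
  also have "?nT + ?nS = Re (cinner x (N *\<^sub>v x))"
    unfolding N_def cinner_add_mult_mat_vec[OF psd_matD(1)[OF psd_mat_pow_mat_abs[OF T]]
      psd_matD(1)[OF psd_mat_pow_mat_abs[OF S]] x] by simp
  also have "?mT + ?mS = Re (cinner w (M *\<^sub>v w))"
    unfolding M_def cinner_add_mult_mat_vec[OF psd_matD(1)[OF psd_mat_pow_mat_abs[OF aT]]
      psd_matD(1)[OF psd_mat_pow_mat_abs[OF aS]] w] by simp
  finally show ?thesis .
qed

section \<open>Schatten norms\<close>

lemma sum_list_map_eq_if_mset_eq:
  "mset xs = mset ys \<Longrightarrow> sum_list (map f xs) = sum_list (map (f :: _ \<Rightarrow> 'b :: comm_monoid_add) ys)"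
  by (metis mset_map sum_mset_sum_list)

lemma sum_list_map_le_if_rev_sort_le:
  fixes xs ys :: "real list"
  assumes len: "length xs = n" "length ys = n" and nonneg: "\<forall>x\<in>set xs. x \<ge> 0"
    and le: "\<And>k. k < n \<Longrightarrow> rev (sort xs) ! k \<le> rev (sort ys) ! k"
    and mono: "\<And>x y. 0 \<le> x \<Longrightarrow> x \<le> y \<Longrightarrow> f x \<le> (f y :: real)"
  shows "sum_list (map f xs) \<le> sum_list (map f ys)"
proof -
  have "sum_list (map f xs) = (\<Sum>k<n. f (rev (sort xs) ! k))"
    using sum_list_map_eq_if_mset_eq[of xs "rev (sort xs)" f] len(1)
    by (simp add: sum_list_sum_nth atLeast0LessThan)
  also have "\<dots> \<le> (\<Sum>k<n. f (rev (sort ys) ! k))"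
  proof (rule sum_mono)
    fix k assume "k \<in> {..<n}"
    hence k: "k < n" by simp
    have "rev (sort xs) ! k \<in> set xs" using k len(1) by (metis length_rev length_sort nth_mem set_rev set_sort)
    thus "f (rev (sort xs) ! k) \<le> f (rev (sort ys) ! k)" using mono nonneg le[OF k] by blast
  qed
  also have "\<dots> = sum_list (map f ys)"
    using sum_list_map_eq_if_mset_eq[of ys "rev (sort ys)" f] len(2)
    by (simp add: sum_list_sum_nth atLeast0LessThan)
  finally show ?thesis .
qed

lemma sum_powr_singular_values:
  assumes X: "X \<in> carrier_mat n n"
  shows "(\<Sum>s\<leftarrow>singular_values X. s powr p) = (\<Sum>d\<leftarrow>psd_eigenvalues (mat_adjoint X * X). d powr (p/2))"
proof -
  have nonneg: "\<forall>d\<in>set (psd_eigenvalues (mat_adjoint X * X)). d \<ge> 0"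
    using psd_eigenvalues(2)[OF psd_mat_adjoint_mult_self[OF X]] .
  have "(\<Sum>s\<leftarrow>singular_values X. s powr p) = (\<Sum>d\<leftarrow>psd_eigenvalues (mat_adjoint X * X). sqrt d powr p)"
    using sum_list_map_eq_if_mset_eq[OF mset_singular_values[OF X], of "\<lambda>s. s powr p"] by (simp add: comp_def)
  also have "\<dots> = (\<Sum>d\<leftarrow>psd_eigenvalues (mat_adjoint X * X). d powr (p/2))"
    using nonneg
    by (intro arg_cong[where f = sum_list] map_cong refl) (simp add: powr_half_sqrt[symmetric] powr_powr)
  finally show ?thesis .
qed

lemma sum_powr_singular_values_psd:
  "psd_mat n A \<Longrightarrow> (\<Sum>s\<leftarrow>singular_values A. s powr q) = (\<Sum>e\<leftarrow>psd_eigenvalues A. e powr q)"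
  by (rule sum_list_map_eq_if_mset_eq[OF mset_singular_values_psd])

lemma schatten_norm_dim_0: "X \<in> carrier_mat 0 0 \<Longrightarrow> schatten_norm p X = 0"
  unfolding schatten_norm_def using length_singular_values[of X 0] by simp

text \<open>The hypothesis says \<open>X\<^sup>* X \<le> c N\<close> in the Loewner order, so by Weyl's monotonicity principle
  each eigenvalue of \<open>X\<^sup>* X\<close> is at most the corresponding eigenvalue of \<open>c N\<close>.\<close>
theorem schatten_norm_le_if_quadratic_bound:
  assumes X: "X \<in> carrier_mat n n" and N: "psd_mat n N" and c: "c \<ge> 0" and p: "p > 0"
    and bound: "\<And>x. x \<in> carrier_vec n \<Longrightarrow> Re (cinner (X *\<^sub>v x) (X *\<^sub>v x)) \<le> c * Re (cinner x (N *\<^sub>v x))"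
  shows "schatten_norm p X \<le> c powr (1/2) * schatten_norm (p/2) N powr (1/2)"
proof -
  obtain U d where ud: "psd_decomp (mat_adjoint X * X) = (U, d)" by fastforce
  note D = psd_decompD[OF psd_mat_adjoint_mult_self[OF X] ud]
  obtain V e where ve: "psd_decomp N = (V, e)" by fastforce
  note E = psd_decompD[OF N ve]
  define ce where "ce = map ((*) c) e"
  have ce: "length ce = n" unfolding ce_def using E(2) by simp
  have "Re (cinner x ((U * rdiag d * mat_adjoint U) *\<^sub>v x)) \<le>
      Re (cinner x ((V * rdiag ce * mat_adjoint V) *\<^sub>v x))"
    if x: "x \<in> carrier_vec n" for x
  proof -
    have "cinner x ((U * rdiag d * mat_adjoint U) *\<^sub>v x) = cinner (X *\<^sub>v x) (X *\<^sub>v x)"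
      unfolding D(4)[symmetric] using cinner_adjoint[OF mat_adjoint_carrier[OF X] x, of "X *\<^sub>v x"] X x
      by (simp add: assoc_mult_mat_vec[of _ n n _ n])
    moreover have "Re (cinner x ((V * rdiag ce * mat_adjoint V) *\<^sub>v x)) = c * Re (cinner x (N *\<^sub>v x))"
      unfolding cinner_spectral[OF E(1) ce x] E(4) cinner_spectral[OF E(1,2) x]
      using E(2) by (simp add: ce_def sum_distrib_left mult.assoc)
    ultimately show ?thesis using bound[OF x] by simp
  qed
  hence weyl: "rev (sort d) ! k \<le> rev (sort ce) ! k" if "k < n" for k
    using spectral_weyl_mono[OF D(1,2) E(1) ce _ that] by blast
  have "(\<Sum>s\<leftarrow>singular_values X. s powr p) = (\<Sum>x\<leftarrow>d. x powr (p/2))"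
    using sum_powr_singular_values[OF X] ud by (simp add: psd_eigenvalues_def)
  also have "\<dots> \<le> (\<Sum>x\<leftarrow>ce. x powr (p/2))"
    using D(2,3) ce weyl p
    by (intro sum_list_map_le_if_rev_sort_le[of _ n]) (auto simp: in_set_conv_nth intro: powr_mono2)
  also have "\<dots> = c powr (p/2) * (\<Sum>s\<leftarrow>singular_values N. s powr (p/2))"
    unfolding sum_powr_singular_values_psd[OF N] psd_eigenvalues_def ve ce_def
    using E(2,3) c by (simp add: powr_mult sum_list_const_mult in_set_conv_nth comp_def cong: map_cong)
  finally have le: "(\<Sum>s\<leftarrow>singular_values X. s powr p) \<le> c powr (p/2) * (\<Sum>s\<leftarrow>singular_values N. s powr (p/2))" .
  have "schatten_norm p X \<le> (c powr (p/2) * (\<Sum>s\<leftarrow>singular_values N. s powr (p/2))) powr (1/p)"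
  proof -
    have "0 \<le> (\<Sum>s\<leftarrow>singular_values X. s powr p)" by (rule sum_list_nonneg) auto
    thus ?thesis unfolding schatten_norm_def using le p by (intro powr_mono2) auto
  qed
  also have "\<dots> = c powr (1/2) * schatten_norm (p/2) N powr (1/2)"
    unfolding schatten_norm_def using c p
    by (simp add: powr_mult powr_powr sum_list_nonneg)
  finally show ?thesis .
qed

lemma quadratic_bound_if_mixed_schwarz:
  assumes X: "X \<in> carrier_mat n n" and M: "psd_mat n M" and N: "psd_mat n N" and n: "n > 0"
    and mixed: "\<And>x w. x \<in> carrier_vec n \<Longrightarrow> w \<in> carrier_vec n \<Longrightarrow>
      (cmod (cinner w (X *\<^sub>v x)))\<^sup>2 \<le> Re (cinner x (N *\<^sub>v x)) * Re (cinner w (M *\<^sub>v w))"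
    and x: "x \<in> carrier_vec n"
  shows "Re (cinner (X *\<^sub>v x) (X *\<^sub>v x)) \<le> op_norm M * Re (cinner x (N *\<^sub>v x))"
proof -
  define w where "w = X *\<^sub>v x"
  have w: "w \<in> carrier_vec n" unfolding w_def using X x by simp
  let ?W = "Re (cinner w w)" and ?c = "op_norm M" and ?q = "Re (cinner x (N *\<^sub>v x))"
  have q: "?q \<ge> 0" by (rule psd_matD(3)[OF N x])
  have "?W\<^sup>2 = (cmod (cinner w (X *\<^sub>v x)))\<^sup>2"
    unfolding w_def[symmetric] by (subst cinner_self_real) (simp add: cinner_self_nonneg)
  also have "\<dots> \<le> ?q * Re (cinner w (M *\<^sub>v w))" by (rule mixed[OF x w])
  also have "\<dots> \<le> ?q * (?c * ?W)" using cinner_le_op_norm[OF M n w] q by (rule mult_left_mono)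
  finally have "?W * ?W \<le> (?c * ?q) * ?W" by (simp add: power2_eq_square mult_ac)
  moreover have "?W \<ge> 0" "?c \<ge> 0" using cinner_self_nonneg op_norm_nonneg[OF M n] by auto
  ultimately have "?W \<le> ?c * ?q" using q by (cases "?W = 0") auto
  thus ?thesis unfolding w_def .
qed

theorem schatten_norm_add_le:
  fixes T S :: "complex mat" and p t r :: real
  assumes T: "T \<in> carrier_mat n n" and S: "S \<in> carrier_mat n n" and p: "p > 0"
  shows "schatten_norm p (T + S) \<le>
    op_norm (psd_pow (mat_abs (mat_adjoint T)) (2 * t) + psd_pow (mat_abs (mat_adjoint S)) (2 * r)) powr (1/2)
    * schatten_norm (p / 2) (psd_pow (mat_abs T) (2 * (1 - t)) + psd_pow (mat_abs S) (2 * (1 - r))) powr (1/2)"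
    (is "_ \<le> op_norm ?M powr _ * schatten_norm _ ?N powr _")
proof (cases "n = 0")
  case True
  thus ?thesis using schatten_norm_dim_0[of "T + S"] schatten_norm_dim_0[of ?N] T S by simp
next
  case False
  have M: "psd_mat n ?M" and N: "psd_mat n ?N"
    using T S by (intro psd_mat_add psd_mat_pow_mat_abs; simp)+
  have "Re (cinner ((T + S) *\<^sub>v x) ((T + S) *\<^sub>v x)) \<le> op_norm ?M * Re (cinner x (?N *\<^sub>v x))"
    if "x \<in> carrier_vec n" for x
    using False T S mixed_schwarz_add[OF T S]
    by (intro quadratic_bound_if_mixed_schwarz[OF _ M N _ _ that]) simp_all
  thus ?thesis
    using False T S by (intro schatten_norm_le_if_quadratic_bound[OF _ N op_norm_nonneg[OF M] p]) simp_all
qed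

theorem corollary4p3:
  fixes T S :: "complex mat" and n :: nat and p t :: real
  assumes "T \<in> carrier_mat n n" and "S \<in> carrier_mat n n"
    and "p > 0" and "0 \<le> t" and "t \<le> 1"
  shows "(schatten_norm p (T + S) \<le>
           op_norm (psd_pow (mat_abs (mat_adjoint T)) (2 * t) + psd_pow (mat_abs (mat_adjoint S)) (2 * t)) powr (1/2)
         * schatten_norm (p / 2) (psd_pow (mat_abs T) (2 * (1 - t)) + psd_pow (mat_abs S) (2 * (1 - t))) powr (1/2)) \<and>
         (schatten_norm p (T + S) \<le>
           op_norm (psd_pow (mat_abs (mat_adjoint T)) (2 * t) + psd_pow (mat_abs (mat_adjoint S)) (2 * (1 - t))) powr (1/2)
         * schatten_norm (p / 2) (psd_pow (mat_abs T) (2 * (1 - t)) + psd_pow (mat_abs S) (2 * t)) powr (1/2))"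
  using schatten_norm_add_le[OF assms(1-3), of t t] schatten_norm_add_le[OF assms(1-3), of t "1 - t"]
  by simp

end
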